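(* Let $((f_t),(g_t),(h_t))$ be a $W_{1,+}$-geodesic on $G$ with associated function $m$. Define kernels $K(x_1,x_0)=m(x_0,x_1)/m(x_1)$ for $x_0\in\mathcal{E}(x_1)$ and $K^*(x_0,x_1)=m(x_0,x_1)/m(x_0)$ for $x_1\in\mathcal{F}(x_0)$ (both zero otherwise), acting on functions by $Kf(x_1)=\sum_{x_0}K(x_1,x_0)f(x_0)$ and $K^*f(x_0)=\sum_{x_1}K^*(x_0,x_1)f(x_1)$. Then: (1) if $x_1\notin\mathcal{A}$, $\sum_{x_0\in\mathcal{E}(x_1)}K(x_1,x_0)=1$; (2) if $x_0\notin\mathcal{B}$, $\sum_{x_1\in\mathcal{F}(x_0)}K^*(x_0,x_1)=1$; (3) $K$ and $K^*$ are adjoint for the scalar product $\langle f,g\rangle=\sum_{x\in G}f(x)g(x)m(x)$; (4) for $n\ge1$, $K^n(x_n,x_0)>0$ only if $x_0\le x_n$ and $d(x_0,x_n)=n$, and for such a pair $K^n(x_n,x_0)=m(x_0,x_n)/m(x_n)$; (5) for $x_0\le x_n$ with $d(x_0,x_n)=n$, $(K^* )^n(x_0,x_n)=m(x_0,x_n)/m(x_0)$; (6) $K$ and $K^*$ are nilpotent.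
   Context: $G$ is a connected, locally finite graph with graph distance $d$; geodesics are paths of adjacent vertices $\gamma(0),\dots,\gamma(n)$ with $n=d(\gamma(0),\gamma(n))$, $e_0(\gamma)=\gamma(0)$, $e_1(\gamma)=\gamma(n)$. For finitely supported probability distributions $f_0,f_1$: $\Pi_1(f_0,f_1)$ = couplings minimizing $\sum d(x,y)\pi(x,y)$ (minimum $W_1$), $\mathcal{C}(f_0,f_1)=\{(x,y):\pi(x,y)>0$ for some $\pi\in\Pi_1\}$; $W_1$-orientation: adjacent $x,y$ get $x\to y$ iff some geodesic $\gamma$ with $(e_0(\gamma),e_1(\gamma))\in\mathcal{C}(f_0,f_1)$ has $\gamma(k)=x,\gamma(k+1)=y$. Oriented paths: $\gamma(i)\to\gamma(i+1)$; $x\le y$ iff an oriented path (possibly of length $0$) goes from $x$ to $y$; $\gamma_i=\gamma(i)$. $E(G)=\{(xy):x\to y\}$, $T(G)$ the triples $x_0\to x_1\to x_2$, $\mathcal{F}(x)=\{y:x\to y\}$, $\mathcal{E}(x)=\{y:y\to x\}$; $\nabla g(x_1)=\sum_{\mathcal{F}(x_1)}g(x_1x_2)-\sum_{\mathcal{E}(x_1)}g(x_0x_1)$, $\nabla h(x_1x_2)=\sum_{x_3\in\mathcal{F}(x_2)}h(x_1x_2x_3)-\sum_{x_0\in\mathcal{E}(x_1)}h(x_0x_1x_2)$. $W_{1,+}$-geodesic: a family $(f_t)_{t\in[0,1]}$ from $f_0$ to $f_1$ with $W_1(f_s,f_t)=|t-s|W_1(f_0,f_1)$, differentiable in $t$,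 with $g_t$ on $E(G)$, $h_t$ on $T(G)$, $\partial_tf_t=-\nabla g_t$, $\partial_tg_t=-\nabla h_t$, $g_t>0$, $f_t(x_1)h_t(x_0x_1x_2)=g_t(x_0x_1)g_t(x_1x_2)$. $C_\gamma(t)=f_t(\gamma_0)$ if $L(\gamma)=0$, $g_t(\gamma_0\gamma_1)$ if $L(\gamma)=1$, $\prod_{i=0}^{n-1}g_t(\gamma_i\gamma_{i+1})/\prod_{j=1}^{n-1}f_t(\gamma_j)$ if $n\ge2$. $\mathcal{A}=\{x:\mathcal{E}(x)=\emptyset\}$, $\mathcal{B}=\{x:\mathcal{F}(x)=\emptyset\}$; extremal oriented paths start in $\mathcal{A}$ and end in $\mathcal{B}$. For $z_1\le\cdots\le z_p$, $m(z_1,\dots,z_p)=\sum_\gamma C_\gamma(0)$ over extremal oriented paths $\gamma$ with indices $k_1\le\dots\le k_p$, $\gamma(k_i)=z_i$ (for extremal $\gamma$, $C_\gamma(t)$ is independent of $t$). *)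

theory Defs
  imports "HOL-Analysis.Analysis"
begin

definition walk :: "('a \<Rightarrow> 'a \<Rightarrow> bool) \<Rightarrow> 'a list \<Rightarrow> bool" where
  "walk adj \<gamma> \<longleftrightarrow> \<gamma> \<noteq> [] \<and> (\<forall>i. Suc i < length \<gamma> \<longrightarrow> adj (\<gamma> ! i) (\<gamma> ! Suc i))"

definition graph_connected :: "('a \<Rightarrow> 'a \<Rightarrow> bool) \<Rightarrow> bool" where
  "graph_connected adj \<longleftrightarrow> (\<forall>x y. \<exists>\<gamma>. walk adj \<gamma> \<and> hd \<gamma> = x \<and> last \<gamma> = y)"

definition locally_finite :: "('a \<Rightarrow> 'a \<Rightarrow> bool) \<Rightarrow> bool" where
  "locally_finite adj \<longleftrightarrow> (\<forall>x. finite {y. adj x y})"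

definition gdist :: "('a \<Rightarrow> 'a \<Rightarrow> bool) \<Rightarrow> 'a \<Rightarrow> 'a \<Rightarrow> nat" where
  "gdist adj x y = (LEAST n. \<exists>\<gamma>. walk adj \<gamma> \<and> hd \<gamma> = x \<and> last \<gamma> = y \<and> length \<gamma> = Suc n)"

definition geodesic :: "('a \<Rightarrow> 'a \<Rightarrow> bool) \<Rightarrow> 'a list \<Rightarrow> bool" where
  "geodesic adj \<gamma> \<longleftrightarrow> walk adj \<gamma> \<and> length \<gamma> = Suc (gdist adj (hd \<gamma>) (last \<gamma>))"

definition fin_prob :: "('a \<Rightarrow> real) \<Rightarrow> bool" where
  "fin_prob p \<longleftrightarrow> (\<forall>x. p x \<ge> 0) \<and> finite {x. p x \<noteq> 0} \<and> (\<Sum>x\<in>{x. p x \<noteq> 0}. p x) = 1"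

definition coupling :: "('a \<Rightarrow> real) \<Rightarrow> ('a \<Rightarrow> real) \<Rightarrow> ('a \<Rightarrow> 'a \<Rightarrow> real) \<Rightarrow> bool" where
  "coupling f0 f1 \<pi> \<longleftrightarrow> (\<forall>x y. \<pi> x y \<ge> 0) \<and> finite {(x, y). \<pi> x y \<noteq> 0}
     \<and> (\<forall>x. (\<Sum>y\<in>{y. \<pi> x y \<noteq> 0}. \<pi> x y) = f0 x)
     \<and> (\<forall>y. (\<Sum>x\<in>{x. \<pi> x y \<noteq> 0}. \<pi> x y) = f1 y)"

definition tcost :: "('a \<Rightarrow> 'a \<Rightarrow> bool) \<Rightarrow> ('a \<Rightarrow> 'a \<Rightarrow> real) \<Rightarrow> real" where
  "tcost adj \<pi> = (\<Sum>p\<in>{(x, y). \<pi> x y \<noteq> 0}. real (gdist adj (fst p) (snd p)) * \<pi> (fst p) (snd p))"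

definition W1 :: "('a \<Rightarrow> 'a \<Rightarrow> bool) \<Rightarrow> ('a \<Rightarrow> real) \<Rightarrow> ('a \<Rightarrow> real) \<Rightarrow> real" where
  "W1 adj f0 f1 = Inf {tcost adj \<pi> | \<pi>. coupling f0 f1 \<pi>}"

definition opt_couplings :: "('a \<Rightarrow> 'a \<Rightarrow> bool) \<Rightarrow> ('a \<Rightarrow> real) \<Rightarrow> ('a \<Rightarrow> real) \<Rightarrow> ('a \<Rightarrow> 'a \<Rightarrow> real) set" where
  "opt_couplings adj f0 f1 = {\<pi>. coupling f0 f1 \<pi> \<and> tcost adj \<pi> = W1 adj f0 f1}"

definition Cset :: "('a \<Rightarrow> 'a \<Rightarrow> bool) \<Rightarrow> ('a \<Rightarrow> real) \<Rightarrow> ('a \<Rightarrow> real) \<Rightarrow> ('a \<times> 'a) set" where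
  "Cset adj f0 f1 = {(x, y). \<exists>\<pi>\<in>opt_couplings adj f0 f1. \<pi> x y > 0}"

definition orient :: "('a \<Rightarrow> 'a \<Rightarrow> bool) \<Rightarrow> ('a \<Rightarrow> real) \<Rightarrow> ('a \<Rightarrow> real) \<Rightarrow> 'a \<Rightarrow> 'a \<Rightarrow> bool" where
  "orient adj f0 f1 x y \<longleftrightarrow> adj x y \<and>
     (\<exists>\<gamma> k. geodesic adj \<gamma> \<and> (hd \<gamma>, last \<gamma>) \<in> Cset adj f0 f1 \<and> Suc k < length \<gamma>
            \<and> \<gamma> ! k = x \<and> \<gamma> ! Suc k = y)"

definition Fset :: "('a \<Rightarrow> 'a \<Rightarrow> bool) \<Rightarrow> 'a \<Rightarrow> 'a set" where
  "Fset r x = {y. r x y}"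

definition Eset :: "('a \<Rightarrow> 'a \<Rightarrow> bool) \<Rightarrow> 'a \<Rightarrow> 'a set" where
  "Eset r x = {y. r y x}"

definition opath :: "('a \<Rightarrow> 'a \<Rightarrow> bool) \<Rightarrow> 'a list \<Rightarrow> bool" where
  "opath r \<gamma> \<longleftrightarrow> \<gamma> \<noteq> [] \<and> (\<forall>i. Suc i < length \<gamma> \<longrightarrow> r (\<gamma> ! i) (\<gamma> ! Suc i))"

definition oleq :: "('a \<Rightarrow> 'a \<Rightarrow> bool) \<Rightarrow> 'a \<Rightarrow> 'a \<Rightarrow> bool" where
  "oleq r x y \<longleftrightarrow> (\<exists>\<gamma>. opath r \<gamma> \<and> hd \<gamma> = x \<and> last \<gamma> = y)"

definition Asrc :: "('a \<Rightarrow> 'a \<Rightarrow> bool) \<Rightarrow> 'a set" where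
  "Asrc r = {x. Eset r x = {}}"

definition Bsink :: "('a \<Rightarrow> 'a \<Rightarrow> bool) \<Rightarrow> 'a set" where
  "Bsink r = {x. Fset r x = {}}"

definition divg :: "('a \<Rightarrow> 'a \<Rightarrow> bool) \<Rightarrow> ('a \<Rightarrow> 'a \<Rightarrow> real) \<Rightarrow> 'a \<Rightarrow> real" where
  "divg r g x1 = (\<Sum>x2\<in>Fset r x1. g x1 x2) - (\<Sum>x0\<in>Eset r x1. g x0 x1)"

definition divh :: "('a \<Rightarrow> 'a \<Rightarrow> bool) \<Rightarrow> ('a \<Rightarrow> 'a \<Rightarrow> 'a \<Rightarrow> real) \<Rightarrow> 'a \<Rightarrow> 'a \<Rightarrow> real" where
  "divh r h x1 x2 = (\<Sum>x3\<in>Fset r x2. h x1 x2 x3) - (\<Sum>x0\<in>Eset r x1. h x0 x1 x2)"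

definition W1plus_geodesic ::
  "('a \<Rightarrow> 'a \<Rightarrow> bool) \<Rightarrow> (real \<Rightarrow> 'a \<Rightarrow> real) \<Rightarrow> (real \<Rightarrow> 'a \<Rightarrow> 'a \<Rightarrow> real)
     \<Rightarrow> (real \<Rightarrow> 'a \<Rightarrow> 'a \<Rightarrow> 'a \<Rightarrow> real) \<Rightarrow> bool" where
  "W1plus_geodesic adj f g h \<longleftrightarrow>
    (let r = orient adj (f 0) (f 1) in
      (\<forall>t\<in>{0..1}. fin_prob (f t))
    \<and> (\<forall>s\<in>{0..1}. \<forall>t\<in>{0..1}. W1 adj (f s) (f t) = \<bar>t - s\<bar> * W1 adj (f 0) (f 1))
    \<and> (\<forall>x. \<forall>t\<in>{0..1}. ((\<lambda>s. f s x) has_real_derivative (- divg r (g t) x)) (at t within {0..1}))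
    \<and> (\<forall>x y. r x y \<longrightarrow> (\<forall>t\<in>{0..1}.
          ((\<lambda>s. g s x y) has_real_derivative (- divh r (h t) x y)) (at t within {0..1})))
    \<and> (\<forall>x y. \<forall>t\<in>{0..1}. r x y \<longrightarrow> g t x y > 0)
    \<and> (\<forall>x0 x1 x2. \<forall>t\<in>{0..1}. r x0 x1 \<longrightarrow> r x1 x2 \<longrightarrow>
          f t x1 * h t x0 x1 x2 = g t x0 x1 * g t x1 x2))"

definition Cpath :: "(real \<Rightarrow> 'a \<Rightarrow> real) \<Rightarrow> (real \<Rightarrow> 'a \<Rightarrow> 'a \<Rightarrow> real) \<Rightarrow> real \<Rightarrow> 'a list \<Rightarrow> real" where
  "Cpath f g t \<gamma> =
    (if length \<gamma> = 1 then f t (\<gamma> ! 0)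
     else if length \<gamma> = 2 then g t (\<gamma> ! 0) (\<gamma> ! 1)
     else (\<Prod>i<length \<gamma> - 1. g t (\<gamma> ! i) (\<gamma> ! Suc i)) / (\<Prod>j\<in>{1..<length \<gamma> - 1}. f t (\<gamma> ! j)))"

definition extremal :: "('a \<Rightarrow> 'a \<Rightarrow> bool) \<Rightarrow> 'a list \<Rightarrow> bool" where
  "extremal r \<gamma> \<longleftrightarrow> opath r \<gamma> \<and> hd \<gamma> \<in> Asrc r \<and> last \<gamma> \<in> Bsink r"

text \<open>\<open>mfun r f g [z1,...,zp]\<close> is \<open>m(z1,...,zp)\<close>.\<close>
definition mfun :: "('a \<Rightarrow> 'a \<Rightarrow> bool) \<Rightarrow> (real \<Rightarrow> 'a \<Rightarrow> real) \<Rightarrow> (real \<Rightarrow> 'a \<Rightarrow> 'a \<Rightarrow> real) \<Rightarrow> 'a list \<Rightarrow> real" where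
  "mfun r f g zs = (\<Sum>\<gamma>\<in>{\<gamma>. extremal r \<gamma> \<and>
       (\<exists>ks. length ks = length zs \<and> sorted ks \<and>
             (\<forall>i<length zs. ks ! i < length \<gamma> \<and> \<gamma> ! (ks ! i) = zs ! i))}. Cpath f g 0 \<gamma>)"

definition Kker :: "('a \<Rightarrow> 'a \<Rightarrow> bool) \<Rightarrow> ('a list \<Rightarrow> real) \<Rightarrow> 'a \<Rightarrow> 'a \<Rightarrow> real" where
  "Kker r m x1 x0 = (if r x0 x1 then m [x0, x1] / m [x1] else 0)"

definition Kstar :: "('a \<Rightarrow> 'a \<Rightarrow> bool) \<Rightarrow> ('a list \<Rightarrow> real) \<Rightarrow> 'a \<Rightarrow> 'a \<Rightarrow> real" where
  "Kstar r m x0 x1 = (if r x0 x1 then m [x0, x1] / m [x0] else 0)"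

definition Kop :: "('a \<Rightarrow> 'a \<Rightarrow> bool) \<Rightarrow> ('a list \<Rightarrow> real) \<Rightarrow> ('a \<Rightarrow> real) \<Rightarrow> 'a \<Rightarrow> real" where
  "Kop r m u x1 = (\<Sum>x0\<in>Eset r x1. Kker r m x1 x0 * u x0)"

definition Kstarop :: "('a \<Rightarrow> 'a \<Rightarrow> bool) \<Rightarrow> ('a list \<Rightarrow> real) \<Rightarrow> ('a \<Rightarrow> real) \<Rightarrow> 'a \<Rightarrow> real" where
  "Kstarop r m u x0 = (\<Sum>x1\<in>Fset r x0. Kstar r m x0 x1 * u x1)"

fun Kpow :: "('a \<Rightarrow> 'a \<Rightarrow> bool) \<Rightarrow> ('a list \<Rightarrow> real) \<Rightarrow> nat \<Rightarrow> 'a \<Rightarrow> 'a \<Rightarrow> real" where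
  "Kpow r m 0 x y = (if x = y then 1 else 0)"
| "Kpow r m (Suc n) x y = (\<Sum>z\<in>Eset r x. Kker r m x z * Kpow r m n z y)"

fun Kstarpow :: "('a \<Rightarrow> 'a \<Rightarrow> bool) \<Rightarrow> ('a list \<Rightarrow> real) \<Rightarrow> nat \<Rightarrow> 'a \<Rightarrow> 'a \<Rightarrow> real" where
  "Kstarpow r m 0 x y = (if x = y then 1 else 0)"
| "Kstarpow r m (Suc n) x y = (\<Sum>z\<in>Fset r x. Kstar r m x z * Kstarpow r m n z y)"

definition mscal :: "('a list \<Rightarrow> real) \<Rightarrow> ('a \<Rightarrow> real) \<Rightarrow> ('a \<Rightarrow> real) \<Rightarrow> real" where
  "mscal m u v = (\<Sum>\<^sub>\<infinity>x. u x * v x * m [x])"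

end

theory Submission
  imports Defs
begin

text \<open>The \<open>W\<^sub>1\<close>-orientation carries an integer Kantorovich potential \<open>\<psi>\<close>: optimal couplings
  are cyclically monotone, so Rockafellar's construction yields a \<open>1\<close>-Lipschitz \<open>\<psi>\<close> that is
  tight on the support of the optimal couplings, and along the geodesics defining the orientation
  it must rise by exactly one per edge. Hence oriented paths are geodesics, there are finitely
  many of them, and they visit vertices in the order of \<open>\<psi>\<close>; so \<open>m(z\<^sub>1, \<dots>, z\<^sub>p)\<close> is simply the
  weight of the extremal paths through all the \<open>z\<^sub>i\<close>. Cutting such a path at an interior vertex
  \<open>z\<close> factors its weight, which gives the Markov property
  \<open>m(x, z) m(z, y) = m(z) m(x, z, y)\<close>; grouping paths by the predecessor (successor) of a
  vertex gives \<open>\<Sum>\<^sub>x\<^sub>0 m(x\<^sub>0, x\<^sub>1) = m(x\<^sub>1)\<close>. Together these yield all claims about \<open>K\<close>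
  and \<open>K\<^sup>*\<close>, nilpotency coming from the bounded length of oriented paths.\<close>

section \<open>Walks and graph distance\<close>

lemma walk_singleton [simp]: "walk adj [x]"
  by (simp add: walk_def)

lemma walk_Cons_Cons [simp]: "walk adj (x # y # ys) \<longleftrightarrow> adj x y \<and> walk adj (y # ys)"
  by (auto simp: walk_def nth_Cons split: nat.splits)

lemma walk_append:
  assumes "walk adj \<alpha>" "walk adj \<beta>" "last \<alpha> = hd \<beta>"
  shows "walk adj (\<alpha> @ tl \<beta>)"
  using assms
proof (induction \<alpha> rule: induct_list012)
  case 1
  then show ?case by (simp add: walk_def)
next
  case (2 x)
  then show ?case by (cases \<beta>) auto
next
  case (3 x y zs)
  then show ?case by auto
qed

lemma walk_mono:
  assumes "walk r \<gamma>" "\<And>x y. r x y \<Longrightarrow> adj x y"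
  shows "walk adj \<gamma>"
  using assms by (auto simp: walk_def)

lemma opath_eq_walk: "opath r = walk r"
  by (rule ext) (simp add: opath_def walk_def)

lemma shortest_walk:
  assumes "graph_connected adj"
  obtains \<gamma> where "walk adj \<gamma>" "hd \<gamma> = x" "last \<gamma> = y" "length \<gamma> = Suc (gdist adj x y)"
proof -
  obtain \<gamma> where "walk adj \<gamma>" "hd \<gamma> = x" "last \<gamma> = y"
    using assms unfolding graph_connected_def by blast
  then have "\<exists>n \<gamma>. walk adj \<gamma> \<and> hd \<gamma> = x \<and> last \<gamma> = y \<and> length \<gamma> = Suc n"
    by (metis walk_def length_greater_0_conv Suc_pred)
  then have "\<exists>\<gamma>. walk adj \<gamma> \<and> hd \<gamma> = x \<and> last \<gamma> = y \<and> length \<gamma> = Suc (gdist adj x y)"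
    unfolding gdist_def by (rule LeastI_ex)
  then show ?thesis
    using that by blast
qed

lemma gdist_le_walk:
  assumes "walk adj \<gamma>" "hd \<gamma> = x" "last \<gamma> = y"
  shows "gdist adj x y \<le> length \<gamma> - 1"
proof -
  have "length \<gamma> = Suc (length \<gamma> - 1)"
    using assms by (simp add: walk_def)
  then show ?thesis
    unfolding gdist_def using assms by (metis (mono_tags, lifting) Least_le)
qed

lemma gdist_refl [simp]: "gdist adj x x = 0"
  using gdist_le_walk[of adj "[x]" x x] by simp

lemma gdist_le_one_if_adj: "adj x y \<Longrightarrow> gdist adj x y \<le> 1"
  using gdist_le_walk[of adj "[x, y]" x y] by simp

lemma gdist_triangle:
  assumes "graph_connected adj"
  shows "gdist adj x z \<le> gdist adj x y + gdist adj y z"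
proof -
  obtain \<alpha> where \<alpha>: "walk adj \<alpha>" "hd \<alpha> = x" "last \<alpha> = y" "length \<alpha> = Suc (gdist adj x y)"
    using shortest_walk[OF assms] .
  obtain \<beta> where \<beta>: "walk adj \<beta>" "hd \<beta> = y" "last \<beta> = z" "length \<beta> = Suc (gdist adj y z)"
    using shortest_walk[OF assms] .
  have "hd (\<alpha> @ tl \<beta>) = x" "last (\<alpha> @ tl \<beta>) = z"
    using \<alpha> \<beta> by (cases \<alpha>; cases \<beta>; auto)+
  then have "gdist adj x z \<le> length (\<alpha> @ tl \<beta>) - 1"
    using gdist_le_walk walk_append \<alpha> \<beta> by metis
  then show ?thesis
    using \<alpha> \<beta> by simp
qed

primrec reachable_within :: "('a \<Rightarrow> 'a \<Rightarrow> bool) \<Rightarrow> 'a \<Rightarrow> nat \<Rightarrow> 'a set" where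
  "reachable_within adj a 0 = {a}"
| "reachable_within adj a (Suc k) = reachable_within adj a k \<union> (\<Union>x\<in>reachable_within adj a k. {y. adj x y})"

lemma finite_reachable_within: "locally_finite adj \<Longrightarrow> finite (reachable_within adj a k)"
  by (induction k) (auto simp: locally_finite_def)

lemma reachable_within_mono: "i \<le> k \<Longrightarrow> reachable_within adj a i \<subseteq> reachable_within adj a k"
  by (induction k) (auto simp: le_Suc_eq)

lemma walk_nth_reachable_within:
  assumes "walk adj \<gamma>" "i < length \<gamma>"
  shows "\<gamma> ! i \<in> reachable_within adj (hd \<gamma>) i"
  using assms(2)
proof (induction i)
  case 0
  then show ?case by (cases \<gamma>) auto
next
  case (Suc i)
  then have "adj (\<gamma> ! i) (\<gamma> ! Suc i)"
    using assms(1) by (simp add: walk_def)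
  then show ?case
    using Suc by auto
qed

section \<open>Optimal couplings are cyclically monotone\<close>

lemma tcost_eq_sum_superset:
  assumes "finite T" "{(x, y). \<pi> x y \<noteq> 0} \<subseteq> T"
  shows "tcost adj \<pi> = (\<Sum>(x, y)\<in>T. real (gdist adj x y) * \<pi> x y)"
  unfolding tcost_def case_prod_beta
  by (rule sum.mono_neutral_left) (use assms in auto)

lemma coupling_iff_marginals:
  assumes "finite T" "{(x, y). \<pi> x y \<noteq> 0} \<subseteq> T" "\<forall>x y. \<pi> x y \<ge> 0"
  shows "coupling f0 f1 \<pi> \<longleftrightarrow>
    (\<forall>x. (\<Sum>y\<in>snd ` T. \<pi> x y) = f0 x) \<and> (\<forall>y. (\<Sum>x\<in>fst ` T. \<pi> x y) = f1 y)"
proof -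
  have "finite {(x, y). \<pi> x y \<noteq> 0}"
    using assms finite_subset by blast
  moreover have "(\<Sum>y\<in>{y. \<pi> x y \<noteq> 0}. \<pi> x y) = (\<Sum>y\<in>snd ` T. \<pi> x y)" for x
    by (rule sum.mono_neutral_left) (use assms in force)+
  moreover have "(\<Sum>x\<in>{x. \<pi> x y \<noteq> 0}. \<pi> x y) = (\<Sum>x\<in>fst ` T. \<pi> x y)" for y
    by (rule sum.mono_neutral_left) (use assms in force)+
  ultimately show ?thesis
    unfolding coupling_def using assms(3) by auto
qed

lemma W1_le_tcost:
  assumes "coupling f0 f1 \<pi>"
  shows "W1 adj f0 f1 \<le> tcost adj \<pi>"
proof -
  have "bdd_below {tcost adj \<pi> | \<pi>. coupling f0 f1 \<pi>}"
    by (rule bdd_belowI[of _ 0]) (auto simp: tcost_def coupling_def intro!: sum_nonneg)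
  then show ?thesis
    unfolding W1_def using assms by (auto intro: cInf_lower)
qed

lemma Cset_marginals_pos:
  assumes "(x, y) \<in> Cset adj f0 f1"
  shows "f0 x > 0" "f1 y > 0"
proof -
  obtain \<pi> where \<pi>: "coupling f0 f1 \<pi>" "\<pi> x y > 0"
    using assms unfolding Cset_def opt_couplings_def by auto
  have fin: "finite {(x, y). \<pi> x y \<noteq> 0}"
    using \<pi> by (simp add: coupling_def)
  have "finite {y. \<pi> x y \<noteq> 0}"
    by (rule finite_subset[OF _ finite_imageI[OF fin, of snd]]) force
  then have "0 < (\<Sum>y\<in>{y. \<pi> x y \<noteq> 0}. \<pi> x y)"
    by (rule sum_pos2[of _ y]) (use \<pi> in \<open>auto simp: coupling_def\<close>)
  then show "f0 x > 0"
    using \<pi> unfolding coupling_def by auto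
  have "finite {x. \<pi> x y \<noteq> 0}"
    by (rule finite_subset[OF _ finite_imageI[OF fin, of fst]]) force
  then have "0 < (\<Sum>x\<in>{x. \<pi> x y \<noteq> 0}. \<pi> x y)"
    by (rule sum_pos2[of _ x]) (use \<pi> in \<open>auto simp: coupling_def\<close>)
  then show "f1 y > 0"
    using \<pi> unfolding coupling_def by auto
qed

lemma finite_Cset:
  assumes "fin_prob f0" "fin_prob f1"
  shows "finite (Cset adj f0 f1)"
proof -
  have "Cset adj f0 f1 \<subseteq> {x. f0 x \<noteq> 0} \<times> {y. f1 y \<noteq> 0}"
    using Cset_marginals_pos by fastforce
  then show ?thesis
    using assms unfolding fin_prob_def by (meson finite_SigmaI finite_subset)
qed

lemma opt_couplings_midpoint:
  assumes "\<pi>1 \<in> opt_couplings adj f0 f1" "\<pi>2 \<in> opt_couplings adj f0 f1"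
  shows "(\<lambda>x y. (\<pi>1 x y + \<pi>2 x y) / 2) \<in> opt_couplings adj f0 f1"
proof -
  let ?\<pi> = "\<lambda>x y. (\<pi>1 x y + \<pi>2 x y) / 2"
  have c1: "coupling f0 f1 \<pi>1" and c2: "coupling f0 f1 \<pi>2"
    and t1: "tcost adj \<pi>1 = W1 adj f0 f1" and t2: "tcost adj \<pi>2 = W1 adj f0 f1"
    using assms by (auto simp: opt_couplings_def)
  define T where "T = {(x, y). \<pi>1 x y \<noteq> 0} \<union> {(x, y). \<pi>2 x y \<noteq> 0}"
  have T: "finite T" using c1 c2 by (simp add: T_def coupling_def)
  have n1: "\<forall>x y. \<pi>1 x y \<ge> 0" and n2: "\<forall>x y. \<pi>2 x y \<ge> 0"
    using c1 c2 by (auto simp: coupling_def)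
  have s1: "{(x, y). \<pi>1 x y \<noteq> 0} \<subseteq> T" and s2: "{(x, y). \<pi>2 x y \<noteq> 0} \<subseteq> T"
    by (auto simp: T_def)
  have s: "{(x, y). ?\<pi> x y \<noteq> 0} \<subseteq> T"
    using n1 n2 by (auto simp: T_def)
  have n: "\<forall>x y. ?\<pi> x y \<ge> 0"
    using n1 n2 by auto
  have "coupling f0 f1 ?\<pi>"
    using coupling_iff_marginals[OF T s1 n1, of f0 f1] coupling_iff_marginals[OF T s2 n2, of f0 f1] c1 c2
    unfolding coupling_iff_marginals[OF T s n]
    by (simp add: sum_divide_distrib[symmetric] sum.distrib)
  moreover have "tcost adj ?\<pi> = W1 adj f0 f1"
    using tcost_eq_sum_superset[OF T s, of adj] tcost_eq_sum_superset[OF T s1, of adj]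
      tcost_eq_sum_superset[OF T s2, of adj] t1 t2
    by (simp add: case_prod_beta sum_divide_distrib[symmetric] sum.distrib distrib_left)
  ultimately show ?thesis
    by (simp add: opt_couplings_def)
qed

lemma opt_coupling_pos_on:
  assumes "finite P" "P \<noteq> {}" "P \<subseteq> Cset adj f0 f1"
  shows "\<exists>\<pi>\<in>opt_couplings adj f0 f1. \<forall>(x, y)\<in>P. \<pi> x y > 0"
  using assms
proof (induction P rule: finite_ne_induct)
  case (singleton p)
  then show ?case by (auto simp: Cset_def)
next
  case (insert p P)
  obtain \<pi>1 where \<pi>1: "\<pi>1 \<in> opt_couplings adj f0 f1" "\<pi>1 (fst p) (snd p) > 0"
    using insert.prems unfolding Cset_def by (cases p) auto
  obtain \<pi>2 where \<pi>2: "\<pi>2 \<in> opt_couplings adj f0 f1" "\<forall>(x, y)\<in>P. \<pi>2 x y > 0"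
    using insert by auto
  have "\<forall>x y. \<pi>1 x y \<ge> 0" "\<forall>x y. \<pi>2 x y \<ge> 0"
    using \<pi>1 \<pi>2 by (auto simp: coupling_def opt_couplings_def)
  then show ?case
    using \<pi>1 \<pi>2 by (intro bexI[OF _ opt_couplings_midpoint[OF \<pi>1(1) \<pi>2(1)]])
      (auto intro: add_pos_nonneg add_nonneg_pos)
qed

lemma sum_count_list_left:
  assumes "finite Y" "snd ` set L \<subseteq> Y"
  shows "(\<Sum>y\<in>Y. real (count_list L (x, y))) = real (count_list (map fst L) x)"
  using assms(2)
proof (induction L)
  case (Cons p L)
  obtain a b where p: "p = (a, b)" by force
  have "(\<Sum>y\<in>Y. real (count_list (p # L) (x, y)))
      = (\<Sum>y\<in>Y. real (count_list L (x, y))) + (\<Sum>y\<in>Y. if y = b \<and> x = a then 1 else 0)"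
    by (auto simp: p sum.distrib[symmetric] intro!: sum.cong)
  also have "(\<Sum>y\<in>Y. if y = b \<and> x = a then 1 else 0 :: real) = (if x = a then 1 else 0)"
    using Cons.prems assms(1) p by (auto simp: sum.delta')
  finally show ?case
    using Cons p by auto
qed simp

lemma sum_count_list_right:
  assumes "finite X" "fst ` set L \<subseteq> X"
  shows "(\<Sum>x\<in>X. real (count_list L (x, y))) = real (count_list (map snd L) y)"
  using assms(2)
proof (induction L)
  case (Cons p L)
  obtain a b where p: "p = (a, b)" by force
  have "(\<Sum>x\<in>X. real (count_list (p # L) (x, y)))
      = (\<Sum>x\<in>X. real (count_list L (x, y))) + (\<Sum>x\<in>X. if x = a \<and> y = b then 1 else 0)"
    by (auto simp: p sum.distrib[symmetric] intro!: sum.cong)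
  also have "(\<Sum>x\<in>X. if x = a \<and> y = b then 1 else 0 :: real) = (if y = b then 1 else 0)"
    using Cons.prems assms(1) p by (auto simp: sum.delta')
  finally show ?case
    using Cons p by auto
qed simp

lemma sum_weighted_count_list:
  assumes "finite T" "set L \<subseteq> T"
  shows "(\<Sum>p\<in>T. h p * real (count_list L p)) = (\<Sum>p\<leftarrow>L. h p)"
  using assms(2)
proof (induction L)
  case (Cons q L)
  have "(\<Sum>p\<in>T. h p * real (count_list (q # L) p))
      = (\<Sum>p\<in>T. h p * real (count_list L p)) + (\<Sum>p\<in>T. if p = q then h p else 0)"
    by (auto simp: sum.distrib[symmetric] algebra_simps intro!: sum.cong)
  also have "(\<Sum>p\<in>T. if p = q then h p else 0) = h q"
    using Cons.prems assms(1) by (auto simp: sum.delta')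
  finally show ?case
    using Cons by auto
qed simp
lemma count_list_le_one_if_distinct: "distinct L \<Longrightarrow> count_list L p \<le> 1"
  by (induction L) (auto simp: count_list_0_iff)

lemma count_list_eq_if_mset_eq: "mset L = mset L' \<Longrightarrow> count_list L x = count_list L' x"
  by (metis count_mset)

lemma coupling_shift_along_lists:
  fixes \<pi> :: "'a \<Rightarrow> 'a \<Rightarrow> real" and P Q :: "('a \<times> 'a) list" and \<epsilon> :: real
  defines "\<pi>' \<equiv> \<lambda>x y. \<pi> x y + \<epsilon> * (real (count_list Q (x, y)) - real (count_list P (x, y)))"
  assumes c: "coupling f0 f1 \<pi>" and nonneg: "\<forall>x y. \<pi>' x y \<ge> 0"
    and fst_eq: "mset (map fst Q) = mset (map fst P)"
    and snd_eq: "mset (map snd Q) = mset (map snd P)"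
  shows "coupling f0 f1 \<pi>'"
    and "tcost adj \<pi>' = tcost adj \<pi>
      + \<epsilon> * ((\<Sum>(x, y)\<leftarrow>Q. real (gdist adj x y)) - (\<Sum>(x, y)\<leftarrow>P. real (gdist adj x y)))"
proof -
  define T where "T = {(x, y). \<pi> x y \<noteq> 0} \<union> set P \<union> set Q"
  have T: "finite T"
    using c by (simp add: T_def coupling_def)
  have supp: "{(x, y). \<pi> x y \<noteq> 0} \<subseteq> T"
    by (auto simp: T_def)
  have supp': "{(x, y). \<pi>' x y \<noteq> 0} \<subseteq> T"
    by (auto simp: T_def \<pi>'_def count_list_0_iff)
  have PQ: "set P \<subseteq> T" "set Q \<subseteq> T"
    by (auto simp: T_def)
  then have snds: "snd ` set P \<subseteq> snd ` T" "snd ` set Q \<subseteq> snd ` T"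
    and fsts: "fst ` set P \<subseteq> fst ` T" "fst ` set Q \<subseteq> fst ` T"
    by auto
  have "\<forall>x y. \<pi> x y \<ge> 0"
    using c by (simp add: coupling_def)
  then have marg: "\<forall>x. (\<Sum>y\<in>snd ` T. \<pi> x y) = f0 x" "\<forall>y. (\<Sum>x\<in>fst ` T. \<pi> x y) = f1 y"
    using coupling_iff_marginals[OF T supp] c by auto
  show "coupling f0 f1 \<pi>'"
    unfolding coupling_iff_marginals[OF T supp' nonneg]
  proof (intro conjI allI)
    fix x
    have "(\<Sum>y\<in>snd ` T. \<pi>' x y) = (\<Sum>y\<in>snd ` T. \<pi> x y) + \<epsilon> *
        ((\<Sum>y\<in>snd ` T. real (count_list Q (x, y))) - (\<Sum>y\<in>snd ` T. real (count_list P (x, y))))"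
      by (simp add: \<pi>'_def sum.distrib sum_subtractf sum_distrib_left right_diff_distrib)
    then show "(\<Sum>y\<in>snd ` T. \<pi>' x y) = f0 x"
      using marg T sum_count_list_left[OF _ snds(1)] sum_count_list_left[OF _ snds(2)]
        count_list_eq_if_mset_eq[OF fst_eq] by simp
  next
    fix y
    have "(\<Sum>x\<in>fst ` T. \<pi>' x y) = (\<Sum>x\<in>fst ` T. \<pi> x y) + \<epsilon> *
        ((\<Sum>x\<in>fst ` T. real (count_list Q (x, y))) - (\<Sum>x\<in>fst ` T. real (count_list P (x, y))))"
      by (simp add: \<pi>'_def sum.distrib sum_subtractf sum_distrib_left right_diff_distrib)
    then show "(\<Sum>x\<in>fst ` T. \<pi>' x y) = f1 y"
      using marg T sum_count_list_right[OF _ fsts(1)] sum_count_list_right[OF _ fsts(2)]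
        count_list_eq_if_mset_eq[OF snd_eq] by simp
  qed
  let ?d = "\<lambda>(x, y). real (gdist adj x y)"
  have "tcost adj \<pi>' = (\<Sum>p\<in>T. ?d p * \<pi>' (fst p) (snd p))"
    using tcost_eq_sum_superset[OF T supp'] by (simp add: case_prod_beta)
  also have "\<dots> = (\<Sum>p\<in>T. ?d p * \<pi> (fst p) (snd p))
      + \<epsilon> * ((\<Sum>p\<in>T. ?d p * real (count_list Q p)) - (\<Sum>p\<in>T. ?d p * real (count_list P p)))"
    unfolding \<pi>'_def by (simp add: sum.distrib sum_subtractf sum_distrib_left algebra_simps)
  also have "\<dots> = tcost adj \<pi> + \<epsilon> * ((\<Sum>p\<leftarrow>Q. ?d p) - (\<Sum>p\<leftarrow>P. ?d p))"
    unfolding sum_weighted_count_list[OF T PQ(1)] sum_weighted_count_list[OF T PQ(2)]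
      tcost_eq_sum_superset[OF T supp] by (simp add: case_prod_beta)
  finally show "tcost adj \<pi>' = tcost adj \<pi>
      + \<epsilon> * ((\<Sum>(x, y)\<leftarrow>Q. real (gdist adj x y)) - (\<Sum>(x, y)\<leftarrow>P. real (gdist adj x y)))" .
qed

text \<open>Cyclical monotonicity of the support of optimal couplings: replacing the pairs
  \<open>(x\<^sub>i, y\<^sub>i)\<close> by \<open>(x\<^sub>i, y\<^sub>i\<^sub>+\<^sub>1)\<close> cannot decrease the cost, since otherwise shifting
  mass \<open>\<epsilon>\<close> from the former to the latter would improve an optimal coupling.\<close>

lemma Cset_cyclically_monotone:
  assumes "distinct ((a, b) # ps)" "set ((a, b) # ps) \<subseteq> Cset adj f0 f1"
  shows "(\<Sum>(x, y)\<leftarrow>(a, b) # ps. real (gdist adj x y))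
     \<le> (\<Sum>(x, y)\<leftarrow>zip (a # map fst ps) (map snd ps @ [b]). real (gdist adj x y))"
proof -
  define P where "P = (a, b) # ps"
  define Q where "Q = zip (a # map fst ps) (map snd ps @ [b])"
  obtain \<pi> where \<pi>: "\<pi> \<in> opt_couplings adj f0 f1" "\<forall>(x, y)\<in>set P. \<pi> x y > 0"
    using opt_coupling_pos_on[of "set P" adj f0 f1] assms by (auto simp: P_def)
  have c: "coupling f0 f1 \<pi>" and opt: "tcost adj \<pi> = W1 adj f0 f1"
    using \<pi> by (auto simp: opt_couplings_def)
  define \<epsilon> where "\<epsilon> = Min ((\<lambda>(x, y). \<pi> x y) ` set P)"
  have \<epsilon>: "\<epsilon> > 0"
    unfolding \<epsilon>_def using \<pi>(2) by (auto simp: P_def)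
  have \<epsilon>_le: "\<epsilon> \<le> \<pi> x y" if "(x, y) \<in> set P" for x y
    unfolding \<epsilon>_def using that by (auto intro: Min_le)
  have nonneg: "\<pi> x y + \<epsilon> * (real (count_list Q (x, y)) - real (count_list P (x, y))) \<ge> 0" for x y
  proof (cases "(x, y) \<in> set P")
    case True
    have "distinct P"
      using assms(1) by (simp only: P_def)
    then have "count_list P (x, y) \<le> 1"
      by (rule count_list_le_one_if_distinct)
    then have "\<epsilon> * real (count_list P (x, y)) \<le> \<pi> x y"
      using \<epsilon> \<epsilon>_le[OF True] by (smt (verit) mult_left_le of_nat_le_1_iff)
    moreover have "0 \<le> \<epsilon> * real (count_list Q (x, y))"
      using \<epsilon> by simp
    ultimately show ?thesis
      by (simp add: right_diff_distrib)
  next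
    case False
    then show ?thesis
      using \<epsilon> c by (simp add: count_list_0_iff coupling_def)
  qed
  have "mset (map fst Q) = mset (map fst P)" "mset (map snd Q) = mset (map snd P)"
    by (simp_all add: P_def Q_def)
  note shift = coupling_shift_along_lists[where \<epsilon> = \<epsilon>, OF c _ this]
  have "W1 adj f0 f1 \<le> tcost adj \<pi>
      + \<epsilon> * ((\<Sum>(x, y)\<leftarrow>Q. real (gdist adj x y)) - (\<Sum>(x, y)\<leftarrow>P. real (gdist adj x y)))"
    using W1_le_tcost[OF shift(1)] shift(2) nonneg by simp
  then show ?thesis
    using opt \<epsilon> by (simp add: P_def Q_def zero_le_mult_iff)
qed

section \<open>An integer Kantorovich potential\<close>

text \<open>Rockafellar's construction: the potential at \<open>x\<close> is the least alternating cost
  \<open>d(s, y\<^sub>1) - d(x\<^sub>1, y\<^sub>1) + d(x\<^sub>1, y\<^sub>2) - \<dots> + d(x\<^sub>k, x)\<close> over distinct chains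
  \<open>(x\<^sub>1, y\<^sub>1), \<dots>, (x\<^sub>k, y\<^sub>k)\<close> in the support set; cyclical monotonicity makes it tight on that set.\<close>

fun chain_cost :: "('a \<Rightarrow> 'a \<Rightarrow> bool) \<Rightarrow> 'a \<Rightarrow> ('a \<times> 'a) list \<Rightarrow> 'a \<Rightarrow> int" where
  "chain_cost adj s [] x = int (gdist adj s x)"
| "chain_cost adj s ((a, b) # cs) x = int (gdist adj s b) - int (gdist adj a b) + chain_cost adj a cs x"

lemma chain_cost_append:
  "chain_cost adj s (cs @ (a, b) # cs') x = chain_cost adj s cs b - int (gdist adj a b) + chain_cost adj a cs' x"
  by (induction cs arbitrary: s) auto

lemma chain_cost_lipschitz:
  assumes "graph_connected adj"
  shows "chain_cost adj s cs y \<le> chain_cost adj s cs x + int (gdist adj x y)"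
proof (induction cs arbitrary: s)
  case Nil
  then show ?case using gdist_triangle[OF assms, where x = s and y = x and z = y] by simp
next
  case (Cons p cs)
  then show ?case by (cases p) force
qed

lemma chain_cost_eq_rotated_sum:
  "real_of_int (chain_cost adj a cs b)
    = (\<Sum>(x, y)\<leftarrow>zip (a # map fst cs) (map snd cs @ [b]). real (gdist adj x y))
    - (\<Sum>(x, y)\<leftarrow>cs. real (gdist adj x y))"
  by (induction cs arbitrary: a) auto

lemma gdist_le_chain_cost:
  assumes "distinct ((a, b) # cs)" "set ((a, b) # cs) \<subseteq> Cset adj f0 f1"
  shows "int (gdist adj a b) \<le> chain_cost adj a cs b"
  using Cset_cyclically_monotone[OF assms] chain_cost_eq_rotated_sum[of adj a cs b] by simp

lemma Cset_potential:
  assumes conn: "graph_connected adj" and fin: "finite (Cset adj f0 f1)"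
  obtains \<psi> :: "'a \<Rightarrow> int"
  where "\<And>x y. \<psi> y - \<psi> x \<le> int (gdist adj x y)"
    and "\<And>a b. (a, b) \<in> Cset adj f0 f1 \<Longrightarrow> \<psi> b - \<psi> a = int (gdist adj a b)"
proof -
  define C where "C = Cset adj f0 f1"
  define chains where "chains = {cs. set cs \<subseteq> C \<and> distinct cs}"
  have "length cs \<le> card C" if "cs \<in> chains" for cs
  proof -
    have "set cs \<subseteq> C" "distinct cs"
      using that by (auto simp: chains_def)
    then show ?thesis
      using card_mono[OF fin[folded C_def]] distinct_card by metis
  qed
  then have "chains \<subseteq> {cs. set cs \<subseteq> C \<and> length cs \<le> card C}"
    by (auto simp: chains_def)
  then have fin_chains: "finite chains"
    using finite_lists_length_le[OF fin[folded C_def]] finite_subset by blast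
  have "[] \<in> chains"
    by (simp add: chains_def)
  fix s :: 'a
  define \<psi> where "\<psi> x = Min ((\<lambda>cs. chain_cost adj s cs x) ` chains)" for x
  have \<psi>_le: "\<psi> x \<le> chain_cost adj s cs x" if "cs \<in> chains" for cs x
    unfolding \<psi>_def using fin_chains that by simp
  have \<psi>_attained: "\<exists>cs\<in>chains. \<psi> x = chain_cost adj s cs x" for x
  proof -
    have "\<psi> x \<in> (\<lambda>cs. chain_cost adj s cs x) ` chains"
      unfolding \<psi>_def using fin_chains \<open>[] \<in> chains\<close> by (intro Min_in) auto
    then show ?thesis by auto
  qed
  have lip: "\<psi> y - \<psi> x \<le> int (gdist adj x y)" for x y
  proof -
    obtain cs where "cs \<in> chains" "\<psi> x = chain_cost adj s cs x"
      using \<psi>_attained by blast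
    then show ?thesis
      using \<psi>_le[of cs y] chain_cost_lipschitz[OF conn, of s cs y x] by simp
  qed
  have tight: "\<psi> a \<le> \<psi> b - int (gdist adj a b)" if ab: "(a, b) \<in> C" for a b
  proof -
    obtain cs where cs: "cs \<in> chains" "\<psi> b = chain_cost adj s cs b"
      using \<psi>_attained by blast
    show ?thesis
    proof (cases "(a, b) \<in> set cs")
      case False
      then have "cs @ [(a, b)] \<in> chains"
        using cs(1) ab by (auto simp: chains_def)
      then show ?thesis
        using \<psi>_le[of "cs @ [(a, b)]" a] cs(2) chain_cost_append[of adj s cs a b "[]" a] by simp
    next
      case True
      then obtain us vs where split: "cs = us @ (a, b) # vs"
        by (meson split_list)
      have "distinct cs" "set cs \<subseteq> C"
        using cs(1) by (auto simp: chains_def)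
      then have "us @ [(a, b)] \<in> chains" and "int (gdist adj a b) \<le> chain_cost adj a vs b"
        using split gdist_le_chain_cost[of a b vs adj f0 f1] by (auto simp: chains_def C_def)
      then show ?thesis
        using \<psi>_le[of "us @ [(a, b)]" a] cs(2) split chain_cost_append[of adj s us a b "[]" a]
          chain_cost_append[of adj s us a b vs b] by simp
    qed
  qed
  show ?thesis
  proof (rule that)
    fix a b
    assume "(a, b) \<in> Cset adj f0 f1"
    then show "\<psi> b - \<psi> a = int (gdist adj a b)"
      using tight[of a b] lip[where x = a and y = b] by (simp add: C_def)
  qed (rule lip)
qed

section \<open>Structure of the \<open>W\<^sub>1\<close>-orientation\<close>

lemma orient_imp_adj: "orient adj f0 f1 x y \<Longrightarrow> adj x y"
  by (simp add: orient_def)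

lemma finite_orient_edges:
  assumes "locally_finite adj" "finite (Cset adj f0 f1)"
  shows "finite {(x, y). orient adj f0 f1 x y}"
proof (rule finite_subset)
  let ?ball = "\<lambda>(a, b). reachable_within adj a (gdist adj a b)"
  show "finite (\<Union>p\<in>Cset adj f0 f1. ?ball p \<times> ?ball p)"
    using assms finite_reachable_within by (auto intro!: finite_cartesian_product)
  show "{(x, y). orient adj f0 f1 x y} \<subseteq> (\<Union>p\<in>Cset adj f0 f1. ?ball p \<times> ?ball p)"
  proof clarify
    fix x y
    assume "orient adj f0 f1 x y"
    then obtain \<gamma> k where \<gamma>: "geodesic adj \<gamma>" "(hd \<gamma>, last \<gamma>) \<in> Cset adj f0 f1"
      "Suc k < length \<gamma>" "\<gamma> ! k = x" "\<gamma> ! Suc k = y"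
      unfolding orient_def by blast
    let ?a = "hd \<gamma>" and ?b = "last \<gamma>"
    have w: "walk adj \<gamma>" and len: "length \<gamma> = Suc (gdist adj ?a ?b)"
      using \<gamma>(1) by (auto simp: geodesic_def)
    have "\<gamma> ! i \<in> reachable_within adj ?a (gdist adj ?a ?b)" if "i < length \<gamma>" for i
      using walk_nth_reachable_within[OF w that] reachable_within_mono[of i "gdist adj ?a ?b" adj ?a]
        that len by auto
    then show "(x, y) \<in> (\<Union>p\<in>Cset adj f0 f1. ?ball p \<times> ?ball p)"
      using \<gamma> by (intro UN_I[OF \<gamma>(2)]) auto
  qed
qed

text \<open>A potential that is \<open>1\<close>-Lipschitz and tight on the support must climb by \<open>d(a, b)\<close>
  in the \<open>d(a, b)\<close> steps of a geodesic from \<open>a\<close> to \<open>b\<close>, hence by exactly one per step.\<close>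

lemma potential_step_along_orient:
  fixes \<psi> :: "'a \<Rightarrow> int"
  assumes lip: "\<And>x y. \<psi> y - \<psi> x \<le> int (gdist adj x y)"
    and tight: "\<And>a b. (a, b) \<in> Cset adj f0 f1 \<Longrightarrow> \<psi> b - \<psi> a = int (gdist adj a b)"
    and "orient adj f0 f1 x y"
  shows "\<psi> y = \<psi> x + 1"
proof -
  obtain \<gamma> k where \<gamma>: "geodesic adj \<gamma>" "(hd \<gamma>, last \<gamma>) \<in> Cset adj f0 f1"
    "Suc k < length \<gamma>" "\<gamma> ! k = x" "\<gamma> ! Suc k = y"
    using assms(3) unfolding orient_def by blast
  define n where "n = length \<gamma> - 1"
  have w: "walk adj \<gamma>" and len: "gdist adj (hd \<gamma>) (last \<gamma>) = n"
    using \<gamma>(1) by (auto simp: geodesic_def n_def)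
  have ends: "hd \<gamma> = \<gamma> ! 0" "last \<gamma> = \<gamma> ! n"
    using w by (auto simp: n_def walk_def hd_conv_nth last_conv_nth)
  define s where "s i = \<psi> (\<gamma> ! Suc i) - \<psi> (\<gamma> ! i)" for i
  have s_le: "s i \<le> 1" if "i < n" for i
    using lip[where x = "\<gamma> ! i" and y = "\<gamma> ! Suc i"] gdist_le_one_if_adj[of adj "\<gamma> ! i" "\<gamma> ! Suc i"] w that
    by (force simp: s_def walk_def n_def)
  have "(\<Sum>i<n. s i) = \<psi> (\<gamma> ! n) - \<psi> (\<gamma> ! 0)"
    unfolding s_def by (rule sum_lessThan_telescope)
  also have "\<dots> = int n"
    using tight[OF \<gamma>(2)] len ends by simp
  finally have "(\<Sum>i<n. 1 - s i) = 0"
    by (simp add: sum_subtractf)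
  then have "\<forall>i\<in>{..<n}. 1 - s i = 0"
    using s_le by (subst sum_nonneg_eq_0_iff[symmetric]) auto
  then have "s k = 1"
    using \<gamma>(3) by (auto simp: n_def)
  then show ?thesis
    using \<gamma> by (simp add: s_def)
qed

lemma W1plus_geodesic_fin_prob:
  assumes "W1plus_geodesic adj f g h" "t \<in> {0..1}"
  shows "fin_prob (f t)"
  using assms by (simp add: W1plus_geodesic_def Let_def)

lemma W1plus_geodesic_g_pos:
  assumes "W1plus_geodesic adj f g h" "orient adj (f 0) (f 1) x y"
  shows "g 0 x y > 0"
  using assms by (simp add: W1plus_geodesic_def Let_def)

text \<open>The identity \<open>f h = g g\<close> with \<open>g > 0\<close> forces \<open>f > 0\<close> at interior vertices.\<close>

lemma W1plus_geodesic_f_pos: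
  assumes W: "W1plus_geodesic adj f g h"
    and r: "orient adj (f 0) (f 1) x0 x1" "orient adj (f 0) (f 1) x1 x2"
  shows "f 0 x1 > 0"
proof -
  have "f 0 x1 * h 0 x0 x1 x2 = g 0 x0 x1 * g 0 x1 x2"
    using W r by (simp add: W1plus_geodesic_def Let_def)
  moreover have "g 0 x0 x1 * g 0 x1 x2 > 0"
    using W1plus_geodesic_g_pos[OF W] r by simp
  moreover have "f 0 x1 \<ge> 0"
    using W1plus_geodesic_fin_prob[OF W, of 0] by (simp add: fin_prob_def)
  ultimately show ?thesis
    by (metis less_eq_real_def mult_eq_0_iff less_irrefl)
qed

lemma opath_singleton [simp]: "opath r [x]"
  by (simp add: opath_eq_walk)

lemma opath_Cons_Cons [simp]: "opath r (x # y # ys) \<longleftrightarrow> r x y \<and> opath r (y # ys)"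
  by (simp add: opath_eq_walk)

lemma opath_nonempty: "opath r \<gamma> \<Longrightarrow> \<gamma> \<noteq> []"
  by (simp add: opath_def)

lemma opath_length_lt_2: "opath r \<gamma> \<Longrightarrow> length \<gamma> < 2 \<Longrightarrow> \<exists>y. \<gamma> = [y]"
  by (cases \<gamma>) (auto dest: opath_nonempty)

lemma opath_step: "opath r \<gamma> \<Longrightarrow> Suc i < length \<gamma> \<Longrightarrow> r (\<gamma> ! i) (\<gamma> ! Suc i)"
  by (simp add: opath_def)

lemma opath_append: "opath r \<alpha> \<Longrightarrow> opath r \<beta> \<Longrightarrow> last \<alpha> = hd \<beta> \<Longrightarrow> opath r (\<alpha> @ tl \<beta>)"
  by (simp add: opath_eq_walk walk_append)

lemma opath_snoc: "opath r \<alpha> \<Longrightarrow> r (last \<alpha>) y \<Longrightarrow> opath r (\<alpha> @ [y])"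
  using opath_append[of r \<alpha> "[last \<alpha>, y]"] by simp

lemma opath_Cons: "opath r \<beta> \<Longrightarrow> r x (hd \<beta>) \<Longrightarrow> opath r (x # \<beta>)"
  by (cases \<beta>) (auto simp: opath_nonempty)

lemma opath_take: "opath r \<gamma> \<Longrightarrow> 0 < n \<Longrightarrow> opath r (take n \<gamma>)"
  by (auto simp: opath_def)

lemma opath_drop: "opath r \<gamma> \<Longrightarrow> n < length \<gamma> \<Longrightarrow> opath r (drop n \<gamma>)"
  by (auto simp: opath_def)

lemma oleqI: "opath r \<gamma> \<Longrightarrow> hd \<gamma> = x \<Longrightarrow> last \<gamma> = y \<Longrightarrow> oleq r x y"
  unfolding oleq_def by blast

fun path_prod :: "('a \<Rightarrow> 'a \<Rightarrow> real) \<Rightarrow> 'a list \<Rightarrow> real" where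
  "path_prod G (x # y # ys) = G x y * path_prod G (y # ys)"
| "path_prod G _ = 1"

lemma path_prod_eq_prod: "path_prod G \<gamma> = (\<Prod>i<length \<gamma> - 1. G (\<gamma> ! i) (\<gamma> ! Suc i))"
  by (induction G \<gamma> rule: path_prod.induct) (simp_all add: prod.lessThan_Suc_shift del: prod.lessThan_Suc)

lemma path_prod_append:
  assumes "\<alpha> \<noteq> []" "last \<alpha> = hd \<beta>"
  shows "path_prod G (\<alpha> @ tl \<beta>) = path_prod G \<alpha> * path_prod G \<beta>"
  using assms
proof (induction \<alpha> rule: induct_list012)
  case (2 x)
  then show ?case by (cases \<beta>) auto
qed simp_all

lemma prod_list_map_conv_prod_nth: "prod_list (map F xs) = (\<Prod>i<length xs. F (xs ! i))"
  by (induction xs) (simp_all add: prod.lessThan_Suc_shift del: prod.lessThan_Suc)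

lemma prod_inner_vertices:
  assumes "2 \<le> length \<gamma>"
  shows "(\<Prod>j\<in>{1..<length \<gamma> - 1}. F (\<gamma> ! j)) = prod_list (map F (butlast (tl \<gamma>)))"
proof -
  obtain n where n: "length \<gamma> = Suc (Suc n)"
    using assms by (metis add_2_eq_Suc le_Suc_ex)
  have "(\<Prod>j\<in>{1..<length \<gamma> - 1}. F (\<gamma> ! j)) = (\<Prod>i\<in>{0..<n}. F (\<gamma> ! Suc i))"
    using n prod.shift_bounds_Suc_ivl[of "\<lambda>j. F (\<gamma> ! j)" 0 n] by simp
  also have "\<dots> = (\<Prod>i<length (butlast (tl \<gamma>)). F (butlast (tl \<gamma>) ! i))"
    using n by (intro prod.cong) (auto simp: nth_butlast nth_tl)
  also have "\<dots> = prod_list (map F (butlast (tl \<gamma>)))"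
    by (simp add: prod_list_map_conv_prod_nth)
  finally show ?thesis .
qed

lemma Cpath_eq_path_prod:
  assumes "2 \<le> length \<gamma>"
  shows "Cpath f g t \<gamma> = path_prod (g t) \<gamma> / prod_list (map (f t) (butlast (tl \<gamma>)))"
proof (cases "length \<gamma> = 2")
  case True
  then obtain a b where "\<gamma> = [a, b]"
    by (metis (no_types, lifting) One_nat_def Suc_1 length_0_conv length_Suc_conv)
  then show ?thesis by (simp add: Cpath_def)
next
  case False
  then have "Cpath f g t \<gamma>
      = (\<Prod>i<length \<gamma> - 1. g t (\<gamma> ! i) (\<gamma> ! Suc i)) / (\<Prod>j\<in>{1..<length \<gamma> - 1}. f t (\<gamma> ! j))"
    using assms by (simp add: Cpath_def)
  then show ?thesis
    unfolding path_prod_eq_prod prod_inner_vertices[OF assms] .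
qed

lemma Cpath_append:
  assumes "2 \<le> length \<alpha>" "2 \<le> length \<beta>" "last \<alpha> = hd \<beta>"
  shows "Cpath f g t (\<alpha> @ tl \<beta>) = Cpath f g t \<alpha> * Cpath f g t \<beta> / f t (last \<alpha>)"
proof -
  have "\<alpha> \<noteq> []" "tl \<alpha> \<noteq> []" "tl \<beta> \<noteq> []"
    using assms by (auto simp flip: length_greater_0_conv)
  then have "butlast (tl (\<alpha> @ tl \<beta>)) = butlast (tl \<alpha>) @ [last \<alpha>] @ butlast (tl \<beta>)"
    by (metis append.assoc append_butlast_last_id butlast_append last_tl tl_append2)
  moreover have "2 \<le> length (\<alpha> @ tl \<beta>)"
    using assms by simp
  ultimately show ?thesis
    unfolding Cpath_eq_path_prod[OF assms(1)] Cpath_eq_path_prod[OF assms(2)]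
      Cpath_eq_path_prod[OF \<open>2 \<le> length (\<alpha> @ tl \<beta>)\<close>] path_prod_append[OF \<open>\<alpha> \<noteq> []\<close> assms(3)]
    by (simp add: divide_inverse ac_simps)
qed

section \<open>Levelled orientations and the path measure \<open>m\<close>\<close>

lemma sum_group_unique:
  assumes "finite T" "finite Z" "\<And>t. t \<in> T \<Longrightarrow> \<exists>!z. z \<in> Z \<and> P z t"
  shows "(\<Sum>t\<in>T. w t) = (\<Sum>z\<in>Z. \<Sum>t\<in>{t \<in> T. P z t}. w t)"
proof -
  have "(\<Sum>z\<in>Z. \<Sum>t\<in>{t \<in> T. P z t}. w t) = (\<Sum>t\<in>T. \<Sum>z\<in>Z. if P z t then w t else 0)"
    using assms(1) by (simp add: sum.inter_filter sum.swap[of _ Z])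
  also have "\<dots> = (\<Sum>t\<in>T. w t)"
  proof (rule sum.cong[OF refl])
    fix t
    assume "t \<in> T"
    then obtain z where "{z \<in> Z. P z t} = {z}"
      using assms(3) by blast
    then show "(\<Sum>z\<in>Z. if P z t then w t else 0) = w t"
      using assms(2) by (simp add: sum.inter_filter[symmetric])
  qed
  finally show ?thesis ..
qed

text \<open>The properties of a \<open>W\<^sub>1\<^sub>,\<^sub>+\<close>-geodesic at time \<open>0\<close> that the argument needs: finitely many
  oriented edges, an integer level function increasing by one along them, and positive weights.\<close>

locale levelled_orientation =
  fixes r :: "'a \<Rightarrow> 'a \<Rightarrow> bool" and \<psi> :: "'a \<Rightarrow> int"
    and f :: "real \<Rightarrow> 'a \<Rightarrow> real" and g :: "real \<Rightarrow> 'a \<Rightarrow> 'a \<Rightarrow> real"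
  assumes finite_edges: "finite {(x, y). r x y}"
    and level_step: "r x y \<Longrightarrow> \<psi> y = \<psi> x + 1"
    and g_pos: "r x y \<Longrightarrow> g 0 x y > 0"
    and f_nonneg: "f 0 x \<ge> 0"
    and f_pos: "r x0 x1 \<Longrightarrow> r x1 x2 \<Longrightarrow> f 0 x1 > 0"
begin

definition vertices :: "'a set" where
  "vertices = {x. \<exists>y. r x y \<or> r y x}"

lemma finite_vertices: "finite vertices"
proof -
  have "vertices = fst ` {(x, y). r x y} \<union> snd ` {(x, y). r x y}"
    unfolding vertices_def by force
  then show ?thesis
    using finite_edges by simp
qed

lemma finite_Eset: "finite (Eset r x)"
  by (rule finite_subset[OF _ finite_vertices]) (auto simp: Eset_def vertices_def)

lemma finite_Fset: "finite (Fset r x)"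
  by (rule finite_subset[OF _ finite_vertices]) (auto simp: Fset_def vertices_def)

lemma vertex_if_not_source: "x \<notin> Asrc r \<Longrightarrow> x \<in> vertices"
  by (auto simp: vertices_def Asrc_def Eset_def)

lemma vertex_if_not_sink: "x \<notin> Bsink r \<Longrightarrow> x \<in> vertices"
  by (auto simp: vertices_def Bsink_def Fset_def)

lemma vertex_not_source_and_sink: "x \<in> vertices \<Longrightarrow> x \<in> Asrc r \<Longrightarrow> x \<in> Bsink r \<Longrightarrow> False"
  by (auto simp: vertices_def Asrc_def Bsink_def Eset_def Fset_def)

lemma opath_level: "opath r \<gamma> \<Longrightarrow> i < length \<gamma> \<Longrightarrow> \<psi> (\<gamma> ! i) = \<psi> (hd \<gamma>) + int i"
proof (induction i)
  case 0
  then show ?case by (simp add: hd_conv_nth opath_nonempty)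
next
  case (Suc i)
  then show ?case
    using level_step[OF opath_step[OF Suc.prems]] by simp
qed

lemma opath_last_level: "opath r \<gamma> \<Longrightarrow> \<psi> (last \<gamma>) = \<psi> (hd \<gamma>) + int (length \<gamma> - 1)"
  using opath_level[of \<gamma> "length \<gamma> - 1"] opath_nonempty[of r \<gamma>] by (simp add: last_conv_nth)

lemma opath_level_le_iff:
  "opath r \<gamma> \<Longrightarrow> i < length \<gamma> \<Longrightarrow> j < length \<gamma> \<Longrightarrow> \<psi> (\<gamma> ! i) \<le> \<psi> (\<gamma> ! j) \<longleftrightarrow> i \<le> j"
  using opath_level[of \<gamma> i] opath_level[of \<gamma> j] by simp

lemma opath_distinct: "opath r \<gamma> \<Longrightarrow> distinct \<gamma>"
  unfolding distinct_conv_nth using opath_level_le_iff by (metis order_antisym order_refl)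

lemma opath_level_bounds:
  assumes "opath r \<gamma>" "x \<in> set \<gamma>"
  shows "\<psi> (hd \<gamma>) \<le> \<psi> x" "\<psi> x \<le> \<psi> (last \<gamma>)"
proof -
  obtain i where "i < length \<gamma>" "\<gamma> ! i = x"
    using assms(2) by (auto simp: in_set_conv_nth)
  then show "\<psi> (hd \<gamma>) \<le> \<psi> x" "\<psi> x \<le> \<psi> (last \<gamma>)"
    using opath_level[OF assms(1)] opath_last_level[OF assms(1)] by force+
qed

lemma opath_gdist:
  assumes "opath r \<gamma>" "\<And>x y. r x y \<Longrightarrow> adj x y" "\<And>x y. \<psi> y - \<psi> x \<le> int (gdist adj x y)"
  shows "gdist adj (hd \<gamma>) (last \<gamma>) = length \<gamma> - 1"
proof -
  have "walk adj \<gamma>"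
    using assms(1,2) walk_mono by (metis opath_eq_walk)
  then have "gdist adj (hd \<gamma>) (last \<gamma>) \<le> length \<gamma> - 1"
    by (rule gdist_le_walk) simp_all
  then show ?thesis
    using opath_last_level[OF assms(1)] assms(3)[where x = "hd \<gamma>" and y = "last \<gamma>"]
    by linarith
qed

lemma opath_set_vertices:
  assumes "opath r \<gamma>" "2 \<le> length \<gamma>"
  shows "set \<gamma> \<subseteq> vertices"
proof
  fix x
  assume "x \<in> set \<gamma>"
  then obtain i where i: "i < length \<gamma>" "\<gamma> ! i = x"
    by (auto simp: in_set_conv_nth)
  show "x \<in> vertices"
  proof (cases "Suc i < length \<gamma>")
    case True
    then show ?thesis
      using opath_step[OF assms(1) True] i by (auto simp: vertices_def)
  next
    case False
    then have "Suc (i - 1) < length \<gamma>" "Suc (i - 1) = i"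
      using assms i by auto
    then show ?thesis
      using opath_step[OF assms(1), of "i - 1"] i by (auto simp: vertices_def)
  qed
qed

lemma opath_length_le:
  assumes "opath r \<gamma>" "2 \<le> length \<gamma>"
  shows "length \<gamma> \<le> card vertices"
  using card_mono[OF finite_vertices opath_set_vertices[OF assms]]
    distinct_card[OF opath_distinct[OF assms(1)]] by simp

lemma finite_opaths: "finite {\<gamma>. opath r \<gamma> \<and> 2 \<le> length \<gamma>}"
  by (rule finite_subset[OF _ finite_lists_length_le[OF finite_vertices, of "card vertices"]])
    (use opath_set_vertices opath_length_le in blast)

lemma opath_oleq:
  assumes "opath r \<gamma>" "a \<in> set \<gamma>" "b \<in> set \<gamma>" "\<psi> a \<le> \<psi> b"
  shows "oleq r a b"
proof -
  obtain i j where i: "i < length \<gamma>" "\<gamma> ! i = a" and j: "j < length \<gamma>" "\<gamma> ! j = b"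
    using assms(2,3) by (auto simp: in_set_conv_nth)
  have "i \<le> j"
    using opath_level_le_iff[OF assms(1) i(1) j(1)] i(2) j(2) assms(4) by simp
  define \<gamma>' where "\<gamma>' = take (Suc (j - i)) (drop i \<gamma>)"
  have "opath r \<gamma>'"
    unfolding \<gamma>'_def by (rule opath_take[OF opath_drop[OF assms(1) i(1)]]) simp
  moreover have "hd \<gamma>' = a"
    unfolding \<gamma>'_def using i by (simp add: hd_drop_conv_nth)
  moreover have "last \<gamma>' = b"
    unfolding \<gamma>'_def using i j \<open>i \<le> j\<close> by (simp add: take_Suc_conv_app_nth)
  ultimately show ?thesis
    by (rule oleqI)
qed

lemma oleq_obtain_path:
  assumes "oleq r a b"
  obtains \<gamma> where "opath r \<gamma>" "hd \<gamma> = a" "last \<gamma> = b" "\<psi> b = \<psi> a + int (length \<gamma> - 1)"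
  using assms opath_last_level unfolding oleq_def by blast

lemma oleq_not_source:
  assumes "oleq r a b" "\<psi> a < \<psi> b"
  shows "b \<notin> Asrc r"
proof -
  obtain \<gamma> where \<gamma>: "opath r \<gamma>" "hd \<gamma> = a" "last \<gamma> = b" "\<psi> b = \<psi> a + int (length \<gamma> - 1)"
    using oleq_obtain_path[OF assms(1)] .
  then have "Suc (length \<gamma> - 2) < length \<gamma>" "Suc (length \<gamma> - 2) = length \<gamma> - 1"
    using assms(2) by auto
  then have "r (\<gamma> ! (length \<gamma> - 2)) b"
    using opath_step[OF \<gamma>(1)] \<gamma>(3) opath_nonempty[OF \<gamma>(1)] by (metis last_conv_nth)
  then show ?thesis
    by (auto simp: Asrc_def Eset_def)
qed

lemma oleq_not_sink:
  assumes "oleq r a b" "\<psi> a < \<psi> b"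
  shows "a \<notin> Bsink r"
proof -
  obtain \<gamma> where \<gamma>: "opath r \<gamma>" "hd \<gamma> = a" "last \<gamma> = b" "\<psi> b = \<psi> a + int (length \<gamma> - 1)"
    using oleq_obtain_path[OF assms(1)] .
  then have "r (\<gamma> ! 0) (\<gamma> ! Suc 0)"
    using assms(2) opath_step[OF \<gamma>(1), of 0] by simp
  then have "r a (\<gamma> ! Suc 0)"
    using \<gamma>(2) opath_nonempty[OF \<gamma>(1)] by (simp add: hd_conv_nth)
  then show ?thesis
    by (auto simp: Bsink_def Fset_def)
qed

abbreviation weight :: "'a list \<Rightarrow> real" where
  "weight \<equiv> Cpath f g 0"

definition paths_through :: "'a set \<Rightarrow> 'a list set" where
  "paths_through X = {\<gamma>. extremal r \<gamma> \<and> X \<subseteq> set \<gamma>}"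

text \<open>On a chain \<open>z\<^sub>1 \<le> \<dots> \<le> z\<^sub>p\<close> of vertices, \<open>mass {z\<^sub>1, \<dots>, z\<^sub>p}\<close> is the paper's \<open>m(z\<^sub>1, \<dots>, z\<^sub>p)\<close>:
  since levels are strictly increasing along paths, the order of the visits is automatic.\<close>

definition mass :: "'a set \<Rightarrow> real" where
  "mass X = (\<Sum>\<gamma>\<in>paths_through X. weight \<gamma>)"

lemma paths_through_insert: "paths_through (insert z X) = {\<gamma> \<in> paths_through X. z \<in> set \<gamma>}"
  by (auto simp: paths_through_def)

lemma extremal_length:
  assumes "extremal r \<gamma>" "x \<in> set \<gamma>" "x \<in> vertices"
  shows "2 \<le> length \<gamma>"
proof (rule ccontr)
  assume "\<not> 2 \<le> length \<gamma>"
  moreover have "opath r \<gamma>"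
    using assms(1) by (simp add: extremal_def)
  ultimately obtain y where "\<gamma> = [y]"
    by (meson not_le opath_length_lt_2)
  then show False
    using assms vertex_not_source_and_sink[of x] by (auto simp: extremal_def)
qed

lemma finite_paths_through:
  assumes "x \<in> X" "x \<in> vertices"
  shows "finite (paths_through X)"
  by (rule finite_subset[OF _ finite_opaths])
    (use assms extremal_length in \<open>auto simp: paths_through_def extremal_def\<close>)

lemma weight_nonneg:
  assumes "opath r \<gamma>"
  shows "weight \<gamma> \<ge> 0"
proof -
  have "g 0 (\<gamma> ! i) (\<gamma> ! Suc i) \<ge> 0" if "i < length \<gamma> - 1" for i
  proof -
    have "Suc i < length \<gamma>"
      using that by simp
    then show ?thesis
      using g_pos[OF opath_step[OF assms]] by (simp add: less_imp_le)
  qed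
  then show ?thesis
    unfolding Cpath_def using f_nonneg by (auto intro!: divide_nonneg_nonneg prod_nonneg)
qed

lemma weight_pos:
  assumes "opath r \<gamma>" "2 \<le> length \<gamma>"
  shows "weight \<gamma> > 0"
proof -
  have g: "g 0 (\<gamma> ! i) (\<gamma> ! Suc i) > 0" if "i < length \<gamma> - 1" for i
    using g_pos[OF opath_step[OF assms(1), of i]] that by simp
  have "f 0 (\<gamma> ! j) > 0" if "j \<in> {1..<length \<gamma> - 1}" for j
  proof -
    have "Suc (j - 1) = j" "Suc j < length \<gamma>"
      using that by auto
    then have "r (\<gamma> ! (j - 1)) (\<gamma> ! j)" "r (\<gamma> ! j) (\<gamma> ! Suc j)"
      using opath_step[OF assms(1), of "j - 1"] opath_step[OF assms(1), of j] by simp_all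
    then show ?thesis
      by (rule f_pos)
  qed
  then have "0 < (\<Prod>j\<in>{1..<length \<gamma> - 1}. f 0 (\<gamma> ! j))"
    by (rule prod_pos)
  moreover have "0 < (\<Prod>i<length \<gamma> - 1. g 0 (\<gamma> ! i) (\<gamma> ! Suc i))"
    using g by (rule prod_pos) simp
  ultimately show ?thesis
    using assms(2) g[of 0] by (auto simp: Cpath_def)
qed

lemma opath_from_source: "\<exists>\<alpha>. opath r \<alpha> \<and> hd \<alpha> \<in> Asrc r \<and> last \<alpha> = x"
proof (induction x rule: measure_induct_rule[where f = "\<lambda>x. nat (\<psi> x - Min (\<psi> ` vertices))"])
  case (less x)
  show ?case
  proof (cases "x \<in> Asrc r")
    case True
    then show ?thesis by (intro exI[of _ "[x]"]) simp
  next
    case False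
    then obtain w where w: "r w x"
      by (auto simp: Asrc_def Eset_def)
    then have "Min (\<psi> ` vertices) \<le> \<psi> w"
      by (intro Min_le finite_imageI finite_vertices imageI) (auto simp: vertices_def)
    then obtain \<alpha> where \<alpha>: "opath r \<alpha>" "hd \<alpha> \<in> Asrc r" "last \<alpha> = w"
      using less level_step[OF w] by force
    then show ?thesis
      using opath_snoc[OF \<alpha>(1)] w opath_nonempty[OF \<alpha>(1)] by (intro exI[of _ "\<alpha> @ [x]"]) simp
  qed
qed

lemma opath_to_sink: "\<exists>\<beta>. opath r \<beta> \<and> hd \<beta> = x \<and> last \<beta> \<in> Bsink r"
proof (induction x rule: measure_induct_rule[where f = "\<lambda>x. nat (Max (\<psi> ` vertices) - \<psi> x)"])
  case (less x)
  show ?case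
  proof (cases "x \<in> Bsink r")
    case True
    then show ?thesis by (intro exI[of _ "[x]"]) simp
  next
    case False
    then obtain w where w: "r x w"
      by (auto simp: Bsink_def Fset_def)
    then have "\<psi> w \<le> Max (\<psi> ` vertices)"
      by (intro Max_ge finite_imageI finite_vertices imageI) (auto simp: vertices_def)
    then obtain \<beta> where \<beta>: "opath r \<beta>" "hd \<beta> = w" "last \<beta> \<in> Bsink r"
      using less level_step[OF w] by force
    then show ?thesis
      using opath_Cons[OF \<beta>(1)] w opath_nonempty[OF \<beta>(1)] by (intro exI[of _ "x # \<beta>"]) simp
  qed
qed

lemma extremal_through: "\<exists>\<gamma>. extremal r \<gamma> \<and> x \<in> set \<gamma>"
proof -
  obtain \<alpha> where \<alpha>: "opath r \<alpha>" "hd \<alpha> \<in> Asrc r" "last \<alpha> = x"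
    using opath_from_source by blast
  obtain \<beta> where \<beta>: "opath r \<beta>" "hd \<beta> = x" "last \<beta> \<in> Bsink r"
    using opath_to_sink by blast
  have "\<alpha> \<noteq> []" "\<beta> \<noteq> []"
    using \<alpha> \<beta> opath_nonempty by auto
  then have "extremal r (\<alpha> @ tl \<beta>)"
    using opath_append[OF \<alpha>(1) \<beta>(1)] \<alpha> \<beta> by (cases \<beta>) (auto simp: extremal_def split: if_splits)
  moreover have "x \<in> set (\<alpha> @ tl \<beta>)"
    using \<alpha> \<open>\<alpha> \<noteq> []\<close> by auto
  ultimately show ?thesis
    by blast
qed

lemma mass_pos:
  assumes "x \<in> vertices"
  shows "mass {x} > 0"
proof -
  obtain \<gamma> where \<gamma>: "extremal r \<gamma>" "x \<in> set \<gamma>"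
    using extremal_through by blast
  then have "weight \<gamma> > 0"
    using weight_pos extremal_length assms by (auto simp: extremal_def)
  then show ?thesis
    unfolding mass_def using \<gamma> finite_paths_through[of x "{x}"] assms
    by (intro sum_pos2[of _ \<gamma>]) (auto simp: paths_through_def extremal_def intro: weight_nonneg)
qed

lemma mfun_singleton: "mfun r f g [x] = mass {x}"
proof -
  have "{\<gamma>. extremal r \<gamma> \<and> (\<exists>ks. length ks = length [x] \<and> sorted ks \<and>
      (\<forall>i<length [x]. ks ! i < length \<gamma> \<and> \<gamma> ! (ks ! i) = [x] ! i))} = paths_through {x}"
    by (auto simp: paths_through_def in_set_conv_nth intro: exI[of _ "[_]"])
  then show ?thesis
    unfolding mfun_def mass_def by simp
qed

lemma mfun_pair:
  assumes "\<psi> x \<le> \<psi> y"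
  shows "mfun r f g [x, y] = mass {x, y}"
proof -
  have visits: "(\<exists>ks. length ks = length [x, y] \<and> sorted ks \<and>
      (\<forall>i<length [x, y]. ks ! i < length \<gamma> \<and> \<gamma> ! (ks ! i) = [x, y] ! i))
    \<longleftrightarrow> {x, y} \<subseteq> set \<gamma>" if "extremal r \<gamma>" for \<gamma>
  proof
    assume "\<exists>ks. length ks = length [x, y] \<and> sorted ks \<and>
      (\<forall>i<length [x, y]. ks ! i < length \<gamma> \<and> \<gamma> ! (ks ! i) = [x, y] ! i)"
    then obtain ks where ks: "\<forall>i<length [x, y]. ks ! i < length \<gamma> \<and> \<gamma> ! (ks ! i) = [x, y] ! i"
      by blast
    have "ks ! 0 < length \<gamma> \<and> \<gamma> ! (ks ! 0) = x" "ks ! 1 < length \<gamma> \<and> \<gamma> ! (ks ! 1) = y"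
      using ks by auto
    then show "{x, y} \<subseteq> set \<gamma>"
      by (metis empty_subsetI insert_subset nth_mem)
  next
    assume "{x, y} \<subseteq> set \<gamma>"
    then obtain i j where ij: "i < length \<gamma>" "\<gamma> ! i = x" "j < length \<gamma>" "\<gamma> ! j = y"
      by (auto simp: in_set_conv_nth)
    moreover have "opath r \<gamma>"
      using that by (simp add: extremal_def)
    ultimately have "i \<le> j"
      using opath_level_le_iff[of \<gamma> i j] assms by simp
    then show "\<exists>ks. length ks = length [x, y] \<and> sorted ks \<and>
      (\<forall>i<length [x, y]. ks ! i < length \<gamma> \<and> \<gamma> ! (ks ! i) = [x, y] ! i)"
      using ij by (intro exI[of _ "[i, j]"]) (auto simp: less_Suc_eq)
  qed
  have "{\<gamma>. extremal r \<gamma> \<and> (\<exists>ks. length ks = length [x, y] \<and> sorted ks \<and>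
      (\<forall>i<length [x, y]. ks ! i < length \<gamma> \<and> \<gamma> ! (ks ! i) = [x, y] ! i))} = paths_through {x, y}"
    unfolding paths_through_def by (rule Collect_cong) (rule conj_cong[OF refl visits])
  then show ?thesis
    unfolding mfun_def mass_def by (simp only:)
qed

definition paths_from_source :: "'a \<Rightarrow> 'a list set" where
  "paths_from_source z = {\<alpha>. opath r \<alpha> \<and> hd \<alpha> \<in> Asrc r \<and> last \<alpha> = z}"

definition paths_to_sink :: "'a \<Rightarrow> 'a list set" where
  "paths_to_sink z = {\<beta>. opath r \<beta> \<and> hd \<beta> = z \<and> last \<beta> \<in> Bsink r}"

lemma paths_from_source_length:
  assumes "z \<notin> Asrc r" "\<alpha> \<in> paths_from_source z"
  shows "2 \<le> length \<alpha>"
proof (rule ccontr)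
  assume "\<not> 2 \<le> length \<alpha>"
  moreover have "opath r \<alpha>"
    using assms(2) by (simp add: paths_from_source_def)
  ultimately obtain y where "\<alpha> = [y]"
    by (meson not_le opath_length_lt_2)
  then show False
    using assms by (auto simp: paths_from_source_def)
qed

lemma paths_to_sink_length:
  assumes "z \<notin> Bsink r" "\<beta> \<in> paths_to_sink z"
  shows "2 \<le> length \<beta>"
proof (rule ccontr)
  assume "\<not> 2 \<le> length \<beta>"
  moreover have "opath r \<beta>"
    using assms(2) by (simp add: paths_to_sink_def)
  ultimately obtain y where "\<beta> = [y]"
    by (meson not_le opath_length_lt_2)
  then show False
    using assms by (auto simp: paths_to_sink_def)
qed

text \<open>Cutting extremal paths at an interior vertex \<open>z\<close> is a bijection onto pairs of a
  source-to-\<open>z\<close> and a \<open>z\<close>-to-sink path, under which weights factor by \<open>Cpath_append\<close>.\<close>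

lemma mass_split:
  assumes zA: "z \<notin> Asrc r" and zB: "z \<notin> Bsink r" and "\<psi> x \<le> \<psi> z" "\<psi> z \<le> \<psi> y"
  shows "mass {x, z, y} = (\<Sum>\<alpha>\<in>{\<alpha> \<in> paths_from_source z. x \<in> set \<alpha>}. weight \<alpha>)
    * (\<Sum>\<beta>\<in>{\<beta> \<in> paths_to_sink z. y \<in> set \<beta>}. weight \<beta>) / f 0 z"
proof -
  define A where "A = {\<alpha> \<in> paths_from_source z. x \<in> set \<alpha>}"
  define B where "B = {\<beta> \<in> paths_to_sink z. y \<in> set \<beta>}"
  define cut where "cut \<gamma> = nat (\<psi> z - \<psi> (hd \<gamma>))" for \<gamma> :: "'a list"
  have "(\<Sum>\<alpha>\<in>A. weight \<alpha>) * (\<Sum>\<beta>\<in>B. weight \<beta>) / f 0 z = (\<Sum>(\<alpha>, \<beta>)\<in>A \<times> B. weight \<alpha> * weight \<beta> / f 0 z)"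
    by (simp add: sum_product sum.cartesian_product sum_divide_distrib case_prod_unfold)
  also have "\<dots> = (\<Sum>\<gamma>\<in>paths_through {x, z, y}. weight \<gamma>)"
  proof (rule sum.reindex_bij_witness[where j = "\<lambda>(\<alpha>, \<beta>). \<alpha> @ tl \<beta>"
        and i = "\<lambda>\<gamma>. (take (Suc (cut \<gamma>)) \<gamma>, drop (cut \<gamma>) \<gamma>)"])
    fix p
    assume "p \<in> A \<times> B"
    then obtain \<alpha> \<beta> where p: "p = (\<alpha>, \<beta>)" and \<alpha>: "opath r \<alpha>" "hd \<alpha> \<in> Asrc r" "last \<alpha> = z" "x \<in> set \<alpha>"
      and \<beta>: "opath r \<beta>" "hd \<beta> = z" "last \<beta> \<in> Bsink r" "y \<in> set \<beta>"
      and "\<alpha> \<in> paths_from_source z" "\<beta> \<in> paths_to_sink z"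
      by (auto simp: A_def B_def paths_from_source_def paths_to_sink_def)
    then have la: "2 \<le> length \<alpha>" and lb: "2 \<le> length \<beta>"
      using paths_from_source_length[OF zA] paths_to_sink_length[OF zB] by auto
    obtain as where as: "\<alpha> = as @ [z]"
      using \<alpha>(3) opath_nonempty[OF \<alpha>(1)] by (metis append_butlast_last_id)
    obtain bs where bs: "\<beta> = z # bs"
      using \<beta>(2) lb by (cases \<beta>) auto
    with lb have "bs \<noteq> []"
      by auto
    have "hd (\<alpha> @ tl \<beta>) = hd \<alpha>"
      using opath_nonempty[OF \<alpha>(1)] by simp
    then have cut: "cut (\<alpha> @ tl \<beta>) = length as"
      using opath_last_level[OF \<alpha>(1)] \<alpha>(3) as by (simp add: cut_def)
    show "(\<lambda>\<gamma>. (take (Suc (cut \<gamma>)) \<gamma>, drop (cut \<gamma>) \<gamma>)) ((\<lambda>(\<alpha>, \<beta>). \<alpha> @ tl \<beta>) p) = p"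
      using cut p as bs by simp
    have "extremal r (\<alpha> @ tl \<beta>)"
      using opath_append[OF \<alpha>(1) \<beta>(1)] \<alpha> \<beta> \<open>hd (\<alpha> @ tl \<beta>) = hd \<alpha>\<close> bs \<open>bs \<noteq> []\<close>
      by (simp add: extremal_def)
    moreover have "{x, z, y} \<subseteq> set (\<alpha> @ tl \<beta>)"
      using \<alpha> \<beta> as bs by auto
    ultimately show "(\<lambda>(\<alpha>, \<beta>). \<alpha> @ tl \<beta>) p \<in> paths_through {x, z, y}"
      using p by (simp add: paths_through_def)
    show "weight ((\<lambda>(\<alpha>, \<beta>). \<alpha> @ tl \<beta>) p) = (\<lambda>(\<alpha>, \<beta>). weight \<alpha> * weight \<beta> / f 0 z) p"
      using p Cpath_append[OF la lb, of f g 0] \<alpha>(3) \<beta>(2) by simp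
  next
    fix \<gamma>
    assume "\<gamma> \<in> paths_through {x, z, y}"
    then have e: "extremal r \<gamma>" and op: "opath r \<gamma>" and xzy: "x \<in> set \<gamma>" "z \<in> set \<gamma>" "y \<in> set \<gamma>"
      by (auto simp: paths_through_def extremal_def)
    obtain k where k: "k < length \<gamma>" "\<gamma> ! k = z"
      using xzy(2) by (auto simp: in_set_conv_nth)
    have cut: "cut \<gamma> = k"
      using opath_level[OF op k(1)] k(2) by (simp add: cut_def)
    show "(\<lambda>(\<alpha>, \<beta>). \<alpha> @ tl \<beta>) (take (Suc (cut \<gamma>)) \<gamma>, drop (cut \<gamma>) \<gamma>) = \<gamma>"
      unfolding cut by (simp add: tl_drop drop_Suc[symmetric])
    have "x \<in> set (take (Suc k) \<gamma>)"
    proof -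
      obtain i where i: "i < length \<gamma>" "\<gamma> ! i = x"
        using xzy(1) by (auto simp: in_set_conv_nth)
      have "i \<le> k"
        using opath_level_le_iff[OF op i(1) k(1)] i(2) k(2) assms(3) by simp
      then show ?thesis
        using nth_mem[of i "take (Suc k) \<gamma>"] i by simp
    qed
    moreover have "opath r (take (Suc k) \<gamma>)" "hd (take (Suc k) \<gamma>) \<in> Asrc r"
      using opath_take[OF op] e by (simp_all add: extremal_def)
    moreover have "last (take (Suc k) \<gamma>) = z"
      using k by (simp add: take_Suc_conv_app_nth)
    ultimately have "take (Suc k) \<gamma> \<in> A"
      by (simp add: A_def paths_from_source_def)
    moreover have "y \<in> set (drop k \<gamma>)"
    proof -
      obtain j where j: "j < length \<gamma>" "\<gamma> ! j = y"
        using xzy(3) by (auto simp: in_set_conv_nth)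
      have "k \<le> j"
        using opath_level_le_iff[OF op k(1) j(1)] j(2) k(2) assms(4) by simp
      then show ?thesis
        using nth_mem[of "j - k" "drop k \<gamma>"] j by simp
    qed
    moreover have "opath r (drop k \<gamma>)" "hd (drop k \<gamma>) = z" "last (drop k \<gamma>) \<in> Bsink r"
      using opath_drop[OF op k(1)] e k by (simp_all add: extremal_def hd_drop_conv_nth)
    ultimately have "drop k \<gamma> \<in> B"
      by (simp add: B_def paths_to_sink_def)
    with \<open>take (Suc k) \<gamma> \<in> A\<close> show "(take (Suc (cut \<gamma>)) \<gamma>, drop (cut \<gamma>) \<gamma>) \<in> A \<times> B"
      unfolding cut by simp
  qed
  finally show ?thesis
    unfolding mass_def A_def B_def by simp
qed

lemma mass_markov:
  assumes "z \<notin> Asrc r" "z \<notin> Bsink r" "\<psi> x \<le> \<psi> z" "\<psi> z \<le> \<psi> y"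
  shows "mass {x, z} * mass {z, y} = mass {z} * mass {x, z, y}"
proof -
  define a where "a w = (\<Sum>\<alpha>\<in>{\<alpha> \<in> paths_from_source z. w \<in> set \<alpha>}. weight \<alpha>)" for w
  define b where "b w = (\<Sum>\<beta>\<in>{\<beta> \<in> paths_to_sink z. w \<in> set \<beta>}. weight \<beta>)" for w
  have split: "mass {v, z, w} = a v * b w / f 0 z" if "\<psi> v \<le> \<psi> z" "\<psi> z \<le> \<psi> w" for v w
    using mass_split[OF assms(1,2) that] by (simp add: a_def b_def)
  have "mass {x, z} = a x * b z / f 0 z" "mass {z, y} = a z * b y / f 0 z" "mass {z} = a z * b z / f 0 z"
    using split[of x z] split[of z y] split[of z z] assms(3,4) by simp_all
  then show ?thesis
    unfolding split[OF assms(3,4)] by (simp add: ac_simps)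
qed

lemma paths_through_empty_if_not_oleq:
  assumes "\<not> oleq r a b" "\<psi> a \<le> \<psi> b" "{a, b} \<subseteq> X"
  shows "paths_through X = {}"
  using opath_oleq assms by (fastforce simp: paths_through_def extremal_def)

lemma unique_pred_on_opath:
  assumes "opath r \<gamma>" "y \<in> set \<gamma>" "hd \<gamma> \<noteq> y"
  shows "\<exists>!z. z \<in> Eset r y \<and> z \<in> set \<gamma>"
proof -
  obtain k where k: "k < length \<gamma>" "\<gamma> ! k = y"
    using assms(2) by (auto simp: in_set_conv_nth)
  have "k \<noteq> 0"
  proof
    assume "k = 0"
    then show False
      using k assms(3) opath_nonempty[OF assms(1)] by (simp add: hd_conv_nth)
  qed
  then have "r (\<gamma> ! (k - 1)) y"
    using opath_step[OF assms(1), of "k - 1"] k by simp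
  moreover have "z = \<gamma> ! (k - 1)" if z: "r z y" "z \<in> set \<gamma>" for z
  proof -
    obtain j where j: "j < length \<gamma>" "\<gamma> ! j = z"
      using z(2) by (auto simp: in_set_conv_nth)
    have "k = Suc j"
      using level_step[OF z(1)] opath_level[OF assms(1) k(1)] opath_level[OF assms(1) j(1)] k(2) j(2)
      by simp
    then show ?thesis
      using j by simp
  qed
  ultimately show ?thesis
  proof (intro ex1I[of _ "\<gamma> ! (k - 1)"])
    show "\<gamma> ! (k - 1) \<in> Eset r y \<and> \<gamma> ! (k - 1) \<in> set \<gamma>"
      using \<open>r (\<gamma> ! (k - 1)) y\<close> k(1) by (simp add: Eset_def)
  qed (simp add: Eset_def)
qed

lemma unique_succ_on_opath:
  assumes "opath r \<gamma>" "x \<in> set \<gamma>" "last \<gamma> \<noteq> x"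
  shows "\<exists>!z. z \<in> Fset r x \<and> z \<in> set \<gamma>"
proof -
  obtain k where k: "k < length \<gamma>" "\<gamma> ! k = x"
    using assms(2) by (auto simp: in_set_conv_nth)
  have "Suc k < length \<gamma>"
    using k assms(3) opath_nonempty[OF assms(1)] by (metis Suc_lessI diff_Suc_1 last_conv_nth)
  then have "r x (\<gamma> ! Suc k)"
    using opath_step[OF assms(1)] k(2) by metis
  moreover have "z = \<gamma> ! Suc k" if z: "r x z" "z \<in> set \<gamma>" for z
  proof -
    obtain j where j: "j < length \<gamma>" "\<gamma> ! j = z"
      using z(2) by (auto simp: in_set_conv_nth)
    have "j = Suc k"
      using level_step[OF z(1)] opath_level[OF assms(1) k(1)] opath_level[OF assms(1) j(1)] k(2) j(2)
      by simp
    then show ?thesis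
      using j by simp
  qed
  ultimately show ?thesis
  proof (intro ex1I[of _ "\<gamma> ! Suc k"])
    show "\<gamma> ! Suc k \<in> Fset r x \<and> \<gamma> ! Suc k \<in> set \<gamma>"
      using \<open>r x (\<gamma> ! Suc k)\<close> \<open>Suc k < length \<gamma>\<close> by (simp add: Fset_def)
  qed (simp add: Fset_def)
qed

text \<open>Every path counted by \<open>mass X\<close> enters \<open>y\<close> through exactly one predecessor.\<close>

lemma sum_mass_insert_pred:
  assumes "y \<in> X" "y \<in> vertices" "\<And>\<gamma>. \<gamma> \<in> paths_through X \<Longrightarrow> hd \<gamma> \<noteq> y"
  shows "(\<Sum>z\<in>Eset r y. mass (insert z X)) = mass X"
proof -
  have "mass X = (\<Sum>z\<in>Eset r y. \<Sum>\<gamma>\<in>{\<gamma> \<in> paths_through X. z \<in> set \<gamma>}. weight \<gamma>)"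
    unfolding mass_def
  proof (rule sum_group_unique[OF finite_paths_through[OF assms(1,2)] finite_Eset])
    fix \<gamma>
    assume "\<gamma> \<in> paths_through X"
    then have "opath r \<gamma>" "y \<in> set \<gamma>" "hd \<gamma> \<noteq> y"
      using assms by (auto simp: paths_through_def extremal_def)
    then show "\<exists>!z. z \<in> Eset r y \<and> z \<in> set \<gamma>"
      by (rule unique_pred_on_opath)
  qed
  then show ?thesis
    by (simp add: mass_def paths_through_insert)
qed

lemma sum_mass_insert_succ:
  assumes "x \<in> X" "x \<in> vertices" "\<And>\<gamma>. \<gamma> \<in> paths_through X \<Longrightarrow> last \<gamma> \<noteq> x"
  shows "(\<Sum>z\<in>Fset r x. mass (insert z X)) = mass X"
proof -
  have "mass X = (\<Sum>z\<in>Fset r x. \<Sum>\<gamma>\<in>{\<gamma> \<in> paths_through X. z \<in> set \<gamma>}. weight \<gamma>)"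
    unfolding mass_def
  proof (rule sum_group_unique[OF finite_paths_through[OF assms(1,2)] finite_Fset])
    fix \<gamma>
    assume "\<gamma> \<in> paths_through X"
    then have "opath r \<gamma>" "x \<in> set \<gamma>" "last \<gamma> \<noteq> x"
      using assms by (auto simp: paths_through_def extremal_def)
    then show "\<exists>!z. z \<in> Fset r x \<and> z \<in> set \<gamma>"
      by (rule unique_succ_on_opath)
  qed
  then show ?thesis
    by (simp add: mass_def paths_through_insert)
qed

lemma sum_mass_pred_singleton:
  assumes "y \<notin> Asrc r"
  shows "(\<Sum>z\<in>Eset r y. mass {z, y}) = mass {y}"
  using sum_mass_insert_pred[of y "{y}"] vertex_if_not_source[OF assms] assms
  by (auto simp: paths_through_def extremal_def)

lemma sum_mass_succ_singleton:
  assumes "x \<notin> Bsink r"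
  shows "(\<Sum>z\<in>Fset r x. mass {x, z}) = mass {x}"
  using sum_mass_insert_succ[of x "{x}"] vertex_if_not_sink[OF assms] assms
  by (auto simp: paths_through_def extremal_def insert_commute)

lemma sum_mass_pred_between:
  assumes "\<psi> x < \<psi> y" "y \<in> vertices"
  shows "(\<Sum>z\<in>Eset r y. mass {x, z, y}) = mass {x, y}"
proof -
  have "hd \<gamma> \<noteq> y" if "\<gamma> \<in> paths_through {x, y}" for \<gamma>
    using that opath_level_bounds[of \<gamma> x] assms(1) by (auto simp: paths_through_def extremal_def)
  then show ?thesis
    using sum_mass_insert_pred[of y "{x, y}"] assms(2) by (simp add: insert_commute)
qed

lemma sum_mass_succ_between:
  assumes "\<psi> x < \<psi> y" "x \<in> vertices"
  shows "(\<Sum>z\<in>Fset r x. mass {x, z, y}) = mass {x, y}"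
proof -
  have "last \<gamma> \<noteq> x" if "\<gamma> \<in> paths_through {x, y}" for \<gamma>
    using that opath_level_bounds[of \<gamma> y] assms(1) by (auto simp: paths_through_def extremal_def)
  then show ?thesis
    using sum_mass_insert_succ[of x "{x, y}"] assms(2) by (simp add: insert_commute)
qed

section \<open>The kernels \<open>K\<close> and \<open>K\<^sup>*\<close>\<close>

abbreviation m :: "'a list \<Rightarrow> real" where
  "m \<equiv> mfun r f g"

lemma Kker_eq_mass: "r x0 x1 \<Longrightarrow> Kker r m x1 x0 = mass {x0, x1} / mass {x1}"
  using level_step[of x0 x1] by (simp add: Kker_def mfun_singleton mfun_pair)

lemma Kstar_eq_mass: "r x0 x1 \<Longrightarrow> Kstar r m x0 x1 = mass {x0, x1} / mass {x0}"
  using level_step[of x0 x1] by (simp add: Kstar_def mfun_singleton mfun_pair)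

lemma sum_Kker_eq_one:
  assumes "x1 \<notin> Asrc r"
  shows "(\<Sum>x0\<in>Eset r x1. Kker r m x1 x0) = 1"
proof -
  have "(\<Sum>x0\<in>Eset r x1. Kker r m x1 x0) = (\<Sum>x0\<in>Eset r x1. mass {x0, x1}) / mass {x1}"
    by (simp add: sum_divide_distrib Eset_def Kker_eq_mass)
  then show ?thesis
    using sum_mass_pred_singleton[OF assms] mass_pos[OF vertex_if_not_source[OF assms]] by simp
qed

lemma sum_Kstar_eq_one:
  assumes "x0 \<notin> Bsink r"
  shows "(\<Sum>x1\<in>Fset r x0. Kstar r m x0 x1) = 1"
proof -
  have "(\<Sum>x1\<in>Fset r x0. Kstar r m x0 x1) = (\<Sum>x1\<in>Fset r x0. mass {x0, x1}) / mass {x0}"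
    by (simp add: sum_divide_distrib Fset_def Kstar_eq_mass)
  then show ?thesis
    using sum_mass_succ_singleton[OF assms] mass_pos[OF vertex_if_not_sink[OF assms]] by simp
qed

lemma Kop_mult_m: "Kop r m u x * m [x] = (\<Sum>x0\<in>Eset r x. mass {x0, x} * u x0)"
proof (cases "x \<in> Asrc r")
  case True
  then show ?thesis by (simp add: Kop_def Asrc_def)
next
  case False
  then have "mass {x} > 0"
    using mass_pos vertex_if_not_source by blast
  then show ?thesis
    by (simp add: Kop_def mfun_singleton sum_distrib_right Kker_eq_mass Eset_def)
qed

lemma Kstarop_mult_m: "Kstarop r m v x * m [x] = (\<Sum>x1\<in>Fset r x. mass {x, x1} * v x1)"
proof (cases "x \<in> Bsink r")
  case True
  then show ?thesis by (simp add: Kstarop_def Bsink_def)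
next
  case False
  then have "mass {x} > 0"
    using mass_pos vertex_if_not_sink by blast
  then show ?thesis
    by (simp add: Kstarop_def mfun_singleton sum_distrib_right Kstar_eq_mass Fset_def)
qed

lemma infsum_eq_sum_vertices:
  assumes "\<And>x. x \<notin> vertices \<Longrightarrow> h x = 0"
  shows "(\<Sum>\<^sub>\<infinity>x. h x) = (\<Sum>x\<in>vertices. h x)"
proof -
  have "(\<Sum>\<^sub>\<infinity>x. h x) = (\<Sum>\<^sub>\<infinity>x\<in>vertices. h x)"
    by (rule infsum_cong_neutral) (use assms in auto)
  then show ?thesis
    using finite_vertices by simp
qed

lemma Eset_eq_vertices: "Eset r y = {x \<in> vertices. r x y}"
  by (auto simp: Eset_def vertices_def)

lemma Fset_eq_vertices: "Fset r x = {y \<in> vertices. r x y}"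
  by (auto simp: Fset_def vertices_def)

text \<open>Both sides of the adjointness equal \<open>\<Sum>\<^sub>x\<^sub>\<rightarrow>\<^sub>y m(x, y) u(x) v(y)\<close>.\<close>

lemma Kop_adjoint: "mscal m (Kop r m u) v = mscal m u (Kstarop r m v)"
proof -
  have no_edges: "Eset r x = {}" "Fset r x = {}" if "x \<notin> vertices" for x
    using that by (auto simp: Eset_def Fset_def vertices_def)
  have "mscal m (Kop r m u) v = (\<Sum>x\<in>vertices. (Kop r m u x * m [x]) * v x)"
    unfolding mscal_def by (subst infsum_eq_sum_vertices) (auto simp: no_edges Kop_def ac_simps)
  also have "\<dots> = (\<Sum>y\<in>vertices. \<Sum>x\<in>{x \<in> vertices. r x y}. mass {x, y} * u x * v y)"
    unfolding Kop_mult_m Eset_eq_vertices by (simp add: sum_distrib_right)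
  also have "\<dots> = (\<Sum>x\<in>vertices. \<Sum>y\<in>{y \<in> vertices. r x y}. mass {x, y} * u x * v y)"
    by (rule sum.swap_restrict[OF finite_vertices finite_vertices])
  also have "\<dots> = (\<Sum>x\<in>vertices. u x * (Kstarop r m v x * m [x]))"
    unfolding Kstarop_mult_m Fset_eq_vertices by (simp add: sum_distrib_left ac_simps)
  also have "\<dots> = mscal m u (Kstarop r m v)"
    unfolding mscal_def by (subst infsum_eq_sum_vertices) (auto simp: no_edges Kstarop_def ac_simps)
  finally show ?thesis .
qed

lemma sum_nonzero_obtain:
  assumes "(\<Sum>z\<in>Z. a z * b z) \<noteq> (0::real)"
  obtains z where "z \<in> Z" "b z \<noteq> 0"
  using assms by (metis (no_types, lifting) mult_zero_right sum.neutral)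

lemma Kop_funpow_nonzero:
  "(Kop r m ^^ N) u x \<noteq> 0 \<Longrightarrow> \<exists>\<gamma>. opath r \<gamma> \<and> last \<gamma> = x \<and> length \<gamma> = Suc N"
proof (induction N arbitrary: x)
  case 0
  then show ?case by (intro exI[of _ "[x]"]) simp
next
  case (Suc N)
  then have "(\<Sum>z\<in>Eset r x. Kker r m x z * (Kop r m ^^ N) u z) \<noteq> 0"
    unfolding Kop_def[of r m "(Kop r m ^^ N) u" x, symmetric] by simp
  then obtain z where z: "z \<in> Eset r x" "(Kop r m ^^ N) u z \<noteq> 0"
    by (rule sum_nonzero_obtain)
  then obtain \<alpha> where \<alpha>: "opath r \<alpha>" "last \<alpha> = z" "length \<alpha> = Suc N"
    using Suc.IH by blast
  then have "opath r (\<alpha> @ [x])"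
    using z(1) by (intro opath_snoc) (auto simp: Eset_def)
  then show ?case
    using \<alpha> by (intro exI[of _ "\<alpha> @ [x]"]) simp
qed

lemma Kstarop_funpow_nonzero:
  "(Kstarop r m ^^ N) u x \<noteq> 0 \<Longrightarrow> \<exists>\<gamma>. opath r \<gamma> \<and> hd \<gamma> = x \<and> length \<gamma> = Suc N"
proof (induction N arbitrary: x)
  case 0
  then show ?case by (intro exI[of _ "[x]"]) simp
next
  case (Suc N)
  then have "(\<Sum>z\<in>Fset r x. Kstar r m x z * (Kstarop r m ^^ N) u z) \<noteq> 0"
    unfolding Kstarop_def[of r m "(Kstarop r m ^^ N) u" x, symmetric] by simp
  then obtain z where z: "z \<in> Fset r x" "(Kstarop r m ^^ N) u z \<noteq> 0"
    by (rule sum_nonzero_obtain)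
  then obtain \<beta> where \<beta>: "opath r \<beta>" "hd \<beta> = z" "length \<beta> = Suc N"
    using Suc.IH by blast
  then have "opath r (x # \<beta>)"
    using z(1) by (intro opath_Cons) (auto simp: Fset_def)
  then show ?case
    using \<beta> by (intro exI[of _ "x # \<beta>"]) simp
qed

lemma Kop_nilpotent: "\<exists>N. \<forall>u. (Kop r m ^^ N) u = (\<lambda>_. 0)"
proof (intro exI allI ext)
  fix u x
  show "(Kop r m ^^ (card vertices + 1)) u x = 0"
    using Kop_funpow_nonzero opath_length_le by fastforce
qed

lemma Kstarop_nilpotent: "\<exists>N. \<forall>u. (Kstarop r m ^^ N) u = (\<lambda>_. 0)"
proof (intro exI allI ext)
  fix u x
  show "(Kstarop r m ^^ (card vertices + 1)) u x = 0"
    using Kstarop_funpow_nonzero opath_length_le by fastforce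
qed

lemma Kpow_nonzero:
  "Kpow r m n y x \<noteq> 0 \<Longrightarrow> \<exists>\<gamma>. opath r \<gamma> \<and> hd \<gamma> = x \<and> last \<gamma> = y \<and> length \<gamma> = Suc n"
proof (induction n arbitrary: y)
  case 0
  then show ?case by (intro exI[of _ "[x]"]) (simp split: if_splits)
next
  case (Suc n)
  then obtain z where z: "z \<in> Eset r y" "Kpow r m n z x \<noteq> 0"
    by (auto elim: sum_nonzero_obtain)
  then obtain \<alpha> where \<alpha>: "opath r \<alpha>" "hd \<alpha> = x" "last \<alpha> = z" "length \<alpha> = Suc n"
    using Suc.IH by blast
  then have "opath r (\<alpha> @ [y])"
    using z(1) by (intro opath_snoc) (auto simp: Eset_def)
  then show ?case
    using \<alpha> opath_nonempty[OF \<alpha>(1)] by (intro exI[of _ "\<alpha> @ [y]"]) simp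
qed

lemma Kstarpow_nonzero:
  "Kstarpow r m n x y \<noteq> 0 \<Longrightarrow> \<exists>\<gamma>. opath r \<gamma> \<and> hd \<gamma> = x \<and> last \<gamma> = y \<and> length \<gamma> = Suc n"
proof (induction n arbitrary: x)
  case 0
  then show ?case by (intro exI[of _ "[x]"]) (simp split: if_splits)
next
  case (Suc n)
  then obtain z where z: "z \<in> Fset r x" "Kstarpow r m n z y \<noteq> 0"
    by (auto elim: sum_nonzero_obtain)
  then obtain \<beta> where \<beta>: "opath r \<beta>" "hd \<beta> = z" "last \<beta> = y" "length \<beta> = Suc n"
    using Suc.IH by blast
  then have "opath r (x # \<beta>)"
    using z(1) by (intro opath_Cons) (auto simp: Fset_def)
  then show ?case
    using \<beta> opath_nonempty[OF \<beta>(1)] by (intro exI[of _ "x # \<beta>"]) simp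
qed

lemma Kpow_nonzero_imp_level:
  assumes "Kpow r m n y x \<noteq> 0"
  shows "oleq r x y \<and> \<psi> y = \<psi> x + int n"
  using Kpow_nonzero[OF assms] opath_last_level oleqI by fastforce

lemma oleq_gdist_iff_level:
  assumes "\<And>x y. r x y \<Longrightarrow> adj x y" "\<And>x y. \<psi> y - \<psi> x \<le> int (gdist adj x y)" "oleq r x y"
  shows "gdist adj x y = n \<longleftrightarrow> \<psi> y = \<psi> x + int n"
proof -
  obtain \<gamma> where "opath r \<gamma>" "hd \<gamma> = x" "last \<gamma> = y" "\<psi> y = \<psi> x + int (length \<gamma> - 1)"
    using oleq_obtain_path[OF assms(3)] .
  then show ?thesis
    using opath_gdist[OF _ assms(1,2)] by auto
qed

lemma oleq_level_one_imp_edge: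
  assumes "oleq r x y" "\<psi> y = \<psi> x + 1"
  shows "r x y"
proof -
  obtain \<gamma> where \<gamma>: "opath r \<gamma>" "hd \<gamma> = x" "last \<gamma> = y" "\<psi> y = \<psi> x + int (length \<gamma> - 1)"
    using oleq_obtain_path[OF assms(1)] .
  then have "length \<gamma> = 2"
    using assms(2) opath_nonempty[OF \<gamma>(1)] by simp
  then show ?thesis
    using opath_step[OF \<gamma>(1), of 0] \<gamma>(2,3) opath_nonempty[OF \<gamma>(1)] by (simp add: hd_conv_nth last_conv_nth)
qed

text \<open>By the Markov property, each term \<open>K(x\<^sub>n, z) K\<^sup>n\<^sup>-\<^sup>1(z, x\<^sub>0)\<close> of the recursion is
  \<open>m(x\<^sub>0, z, x\<^sub>n) / m(x\<^sub>n)\<close>, and these sum to \<open>m(x\<^sub>0, x\<^sub>n) / m(x\<^sub>n)\<close>.\<close>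

lemma Kpow_eq:
  assumes "1 \<le> n" "oleq r x0 xn" "\<psi> xn = \<psi> x0 + int n"
  shows "Kpow r m n xn x0 = m [x0, xn] / m [xn]"
  using assms
proof (induction n arbitrary: xn rule: nat_induct_at_least)
  case base
  then have "r x0 xn"
    by (simp add: oleq_level_one_imp_edge)
  have "Kpow r m 1 xn x0 = (\<Sum>z\<in>Eset r xn. if z = x0 then Kker r m xn z else 0)"
    by (simp add: if_distrib cong: if_cong)
  also have "\<dots> = Kker r m xn x0"
    using \<open>r x0 xn\<close> by (subst sum.delta[OF finite_Eset]) (simp add: Eset_def)
  finally show ?case
    using \<open>r x0 xn\<close> by (simp add: Kker_def)
next
  case (Suc n)
  have xn: "xn \<notin> Asrc r"
    using oleq_not_source[OF Suc.prems(1)] Suc.prems(2) by simp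
  have summand: "Kker r m xn z * Kpow r m n z x0 = mass {x0, z, xn} / mass {xn}" if "z \<in> Eset r xn" for z
  proof -
    have rz: "r z xn" and lz: "\<psi> z = \<psi> x0 + int n"
      using that level_step[of z xn] Suc.prems(2) by (auto simp: Eset_def)
    show ?thesis
    proof (cases "oleq r x0 z")
      case True
      have z: "z \<notin> Asrc r" "z \<notin> Bsink r"
        using oleq_not_source[OF True] lz Suc.hyps rz by (auto simp: Bsink_def Fset_def)
      have markov: "mass {x0, z} * mass {z, xn} = mass {z} * mass {x0, z, xn}"
        by (rule mass_markov[OF z]) (use lz Suc.prems(2) in simp_all)
      have "mass {z} > 0"
        using mass_pos vertex_if_not_source[OF z(1)] by blast
      have "Kker r m xn z * Kpow r m n z x0 = mass {z, xn} / mass {xn} * (mass {x0, z} / mass {z})"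
        using Suc.IH[OF True lz] lz Kker_eq_mass[OF rz] by (simp add: mfun_singleton mfun_pair)
      also have "\<dots> = (mass {x0, z} * mass {z, xn}) / (mass {z} * mass {xn})"
        by (simp add: ac_simps)
      also have "\<dots> = mass {x0, z, xn} / mass {xn}"
        unfolding markov using \<open>mass {z} > 0\<close> by simp
      finally show ?thesis .
    next
      case False
      then have "Kpow r m n z x0 = 0"
        using Kpow_nonzero[of n z x0] oleqI[of r _ x0 z] by blast
      moreover have "paths_through {x0, z, xn} = {}"
        using paths_through_empty_if_not_oleq[OF False] lz by simp
      ultimately show ?thesis
        by (simp add: mass_def)
    qed
  qed
  have "Kpow r m (Suc n) xn x0 = (\<Sum>z\<in>Eset r xn. mass {x0, z, xn}) / mass {xn}"
    using summand by (simp add: sum_divide_distrib)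
  also have "\<dots> = mass {x0, xn} / mass {xn}"
    using sum_mass_pred_between[of x0 xn] Suc.prems(2) vertex_if_not_source[OF xn] by simp
  finally show ?case
    using Suc.prems(2) by (simp add: mfun_singleton mfun_pair)
qed

lemma Kstarpow_eq:
  assumes "1 \<le> n" "oleq r x0 xn" "\<psi> xn = \<psi> x0 + int n"
  shows "Kstarpow r m n x0 xn = m [x0, xn] / m [x0]"
  using assms
proof (induction n arbitrary: x0 rule: nat_induct_at_least)
  case base
  then have "r x0 xn"
    by (simp add: oleq_level_one_imp_edge)
  have "Kstarpow r m 1 x0 xn = (\<Sum>z\<in>Fset r x0. if z = xn then Kstar r m x0 z else 0)"
    by (simp add: if_distrib cong: if_cong)
  also have "\<dots> = Kstar r m x0 xn"
    using \<open>r x0 xn\<close> by (subst sum.delta[OF finite_Fset]) (simp add: Fset_def)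
  finally show ?case
    using \<open>r x0 xn\<close> by (simp add: Kstar_def)
next
  case (Suc n)
  have x0: "x0 \<notin> Bsink r"
    using oleq_not_sink[OF Suc.prems(1)] Suc.prems(2) by simp
  have summand: "Kstar r m x0 z * Kstarpow r m n z xn = mass {x0, z, xn} / mass {x0}" if "z \<in> Fset r x0" for z
  proof -
    have rz: "r x0 z" and lz: "\<psi> xn = \<psi> z + int n"
      using that level_step[of x0 z] Suc.prems(2) by (auto simp: Fset_def)
    show ?thesis
    proof (cases "oleq r z xn")
      case True
      have z: "z \<notin> Asrc r" "z \<notin> Bsink r"
        using oleq_not_sink[OF True] lz Suc.hyps rz by (auto simp: Asrc_def Eset_def)
      have markov: "mass {x0, z} * mass {z, xn} = mass {z} * mass {x0, z, xn}"
        by (rule mass_markov[OF z]) (use lz level_step[OF rz] in simp_all)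
      have "mass {z} > 0"
        using mass_pos vertex_if_not_source[OF z(1)] by blast
      have "Kstar r m x0 z * Kstarpow r m n z xn = mass {x0, z} / mass {x0} * (mass {z, xn} / mass {z})"
        using Suc.IH[OF True lz] lz Kstar_eq_mass[OF rz] by (simp add: mfun_singleton mfun_pair)
      also have "\<dots> = (mass {x0, z} * mass {z, xn}) / (mass {z} * mass {x0})"
        by (simp add: ac_simps)
      also have "\<dots> = mass {x0, z, xn} / mass {x0}"
        unfolding markov using \<open>mass {z} > 0\<close> by simp
      finally show ?thesis .
    next
      case False
      then have "Kstarpow r m n z xn = 0"
        using Kstarpow_nonzero[of n z xn] oleqI[of r _ z xn] by blast
      moreover have "paths_through {x0, z, xn} = {}"
        using paths_through_empty_if_not_oleq[OF False] lz by auto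
      ultimately show ?thesis
        by (simp add: mass_def)
    qed
  qed
  have "Kstarpow r m (Suc n) x0 xn = (\<Sum>z\<in>Fset r x0. mass {x0, z, xn}) / mass {x0}"
    using summand by (simp add: sum_divide_distrib)
  also have "\<dots> = mass {x0, xn} / mass {x0}"
    using sum_mass_succ_between[of x0 xn] Suc.prems(2) vertex_if_not_sink[OF x0] by simp
  finally show ?case
    using Suc.prems(2) by (simp add: mfun_singleton mfun_pair)
qed

end

lemma W1plus_geodesic_levelled_orientation:
  assumes "graph_connected adj" "locally_finite adj" and W: "W1plus_geodesic adj f g h"
  obtains \<psi> :: "'a \<Rightarrow> int"
  where "levelled_orientation (orient adj (f 0) (f 1)) \<psi> f g"
    and "\<And>x y. \<psi> y - \<psi> x \<le> int (gdist adj x y)"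
proof -
  let ?r = "orient adj (f 0) (f 1)"
  have fin: "finite (Cset adj (f 0) (f 1))"
    using finite_Cset W1plus_geodesic_fin_prob[OF W, of 0] W1plus_geodesic_fin_prob[OF W, of 1] by simp
  obtain \<psi> :: "'a \<Rightarrow> int" where lip: "\<And>x y. \<psi> y - \<psi> x \<le> int (gdist adj x y)"
    and tight: "\<And>a b. (a, b) \<in> Cset adj (f 0) (f 1) \<Longrightarrow> \<psi> b - \<psi> a = int (gdist adj a b)"
    using Cset_potential[OF assms(1) fin] by metis
  have "levelled_orientation ?r \<psi> f g"
  proof
    show "finite {(x, y). ?r x y}"
      by (rule finite_orient_edges[OF assms(2) fin])
    show "\<psi> y = \<psi> x + 1" if "?r x y" for x y
      using lip tight that by (rule potential_step_along_orient)
    show "g 0 x y > 0" if "?r x y" for x y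
      using that by (rule W1plus_geodesic_g_pos[OF W])
    show "f 0 x1 > 0" if "?r x0 x1" "?r x1 x2" for x0 x1 x2
      using that by (rule W1plus_geodesic_f_pos[OF W])
    show "f 0 x \<ge> 0" for x
      using W1plus_geodesic_fin_prob[OF W, of 0] by (simp add: fin_prob_def)
  qed
  then show ?thesis
    using that lip by blast
qed

theorem proposition3p8:
  fixes adj :: "'a \<Rightarrow> 'a \<Rightarrow> bool"
    and f :: "real \<Rightarrow> 'a \<Rightarrow> real"
    and g :: "real \<Rightarrow> 'a \<Rightarrow> 'a \<Rightarrow> real"
    and h :: "real \<Rightarrow> 'a \<Rightarrow> 'a \<Rightarrow> 'a \<Rightarrow> real"
  assumes "symp adj" and "irreflp adj"
    and "graph_connected adj" and "locally_finite adj"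
    and "W1plus_geodesic adj f g h"
  defines "r \<equiv> orient adj (f 0) (f 1)"
    and "m \<equiv> mfun (orient adj (f 0) (f 1)) f g"
  shows "(\<forall>x1. x1 \<notin> Asrc r \<longrightarrow> (\<Sum>x0\<in>Eset r x1. Kker r m x1 x0) = 1)
    \<and> (\<forall>x0. x0 \<notin> Bsink r \<longrightarrow> (\<Sum>x1\<in>Fset r x0. Kstar r m x0 x1) = 1)
    \<and> (\<forall>u v. mscal m (Kop r m u) v = mscal m u (Kstarop r m v))
    \<and> (\<forall>n x0 xn. n \<ge> 1 \<longrightarrow>
          (Kpow r m n xn x0 > 0 \<longrightarrow> oleq r x0 xn \<and> gdist adj x0 xn = n)
        \<and> (oleq r x0 xn \<and> gdist adj x0 xn = n \<longrightarrow> Kpow r m n xn x0 = m [x0, xn] / m [xn]))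
    \<and> (\<forall>n x0 xn. n \<ge> 1 \<longrightarrow> oleq r x0 xn \<and> gdist adj x0 xn = n \<longrightarrow>
          Kstarpow r m n x0 xn = m [x0, xn] / m [x0])
    \<and> (\<exists>N. \<forall>u. (Kop r m ^^ N) u = (\<lambda>_. 0))
    \<and> (\<exists>N. \<forall>u. (Kstarop r m ^^ N) u = (\<lambda>_. 0))"
proof -
  obtain \<psi> :: "'a \<Rightarrow> int" where "levelled_orientation r \<psi> f g"
    and lip: "\<And>x y. \<psi> y - \<psi> x \<le> int (gdist adj x y)"
    using W1plus_geodesic_levelled_orientation[OF assms(3-5)] unfolding r_def by metis
  then interpret levelled_orientation r \<psi> f g
    by simp
  have levels: "oleq r x0 xn \<and> gdist adj x0 xn = n \<longleftrightarrow> oleq r x0 xn \<and> \<psi> xn = \<psi> x0 + int n"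
    for x0 xn n
    using oleq_gdist_iff_level[OF orient_imp_adj[of adj "f 0" "f 1", folded r_def] lip, of x0 xn n] by blast
  show ?thesis
    unfolding m_def r_def[symmetric] levels
    using sum_Kker_eq_one sum_Kstar_eq_one Kop_adjoint Kpow_eq Kstarpow_eq Kop_nilpotent Kstarop_nilpotent
      Kpow_nonzero_imp_level[OF order.strict_implies_not_eq[THEN not_sym]]
    by blast
qed

end
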